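(* The $Q$-integrand $A$ is lower semicontinuous on $\mathcal A_Q(\mathbb R^2\times\mathbb R^{2\times2})$ (with respect to $\mathcal G$). Moreover, if $(a^k,X^k)$ is a sequence in $\mathcal A_Q(\mathbb R^2\times\mathbb R^{2\times2})$ with the same maximal multiplicities as $(a,X)$ and $\mathcal G((a^k,X^k),(a,X))\to0$, then $A(a^k,X^k)\to A(a,X)$. Finally there is $C=C(Q)>0$ with $A(a,X)\le C(1+\|X\|^2)$ for all $(a,X)$.
   Context: $\mathcal A_Q(\mathbb R^k)$ is the space of unordered $Q$-tuples $\sum_{i=1}^Q[x_i]$ of points of $\mathbb R^k$, with metric $\mathcal G(\sum[x_i],\sum[y_i])=\min_\sigma(\sum_i|x_i-y_{\sigma(i)}|^2)^{1/2}$; $q[x]$ denotes $x$ with multiplicity $q$, sums of $Q$-points or of multivalued maps mean concatenation; for $X=\sum[X_i]\in\mathcal A_Q(\mathbb R^{2\times 2})$, $\|X\|=\mathcal G(X,Q[0])$. A maximal decomposition of $p\in\mathcal A_Q(\mathbb R^\ell)$ is a writing $p=\sum_{j=1}^J q_j[p_j]$ with $p_j$ pairwise distinct; $p,p'$ have the same maximal multiplicities if they admit maximal decompositions $\sum_{j=1}^Jq_j[p_j]$, $\sum_{j=1}^Jq_j[p'_j]$ with the same $J$ and $q_j$. $D=(-\tfrac12,\tfrac12)^2$. For $(a,X)\in\mathcal A_Q(\mathbb R^2\times\mathbb R^{2\times2})$ with maximal decomposition $\sum_{j=1}^Jq_j[(a_j,X_j)]$ and bounded open $U\subset\mathbb R^2$,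 $\mathcal T(a,X,U)$ is the set of Lipschitz $\varphi:U\to\mathcal A_Q(\mathbb R^2)$ of the form $\varphi=\sum_{j=1}^J\varphi_j$ with $\varphi_j:U\to\mathcal A_{q_j}(\mathbb R^2)$ Lipschitz and $\varphi_j(x)=q_j[a_j+X_jx]$ for $x\in\partial U$. For $X\in\mathbb R^{2\times2}$, $\Lambda M(X)\in\Lambda^2\mathbb R^4$ is the wedge product of the two columns of the $4\times2$ matrix $\binom{I_2}{X}$, i.e. $(e_1+X_{11}e_3+X_{21}e_4)\wedge(e_2+X_{12}e_3+X_{22}e_4)$, and $\|\cdot\|$ on $\Lambda^2\mathbb R^4$ is the Euclidean norm in the basis $e_i\wedge e_j$. Fix $\varepsilon\in(0,(4/3)^{1/4})$ and let $\delta=\delta(\varepsilon)>0$ be the unique positive number such that the three $2$-vectors $v_1=(\delta e_1+\tfrac12(e_3+\varepsilon^2\delta e_2))\wedge(\delta e_2+\tfrac12(e_4+\varepsilon^2\delta e_1))$, $v_2=(\delta e_1-\tfrac12(e_3+\varepsilon^2\delta e_2))\wedge(\delta e_2-\tfrac12(e_4+\varepsilon^2\delta e_1))$, $v_3=\tfrac12(e_4+\varepsilon^2\delta e_1)\wedge(e_3+\varepsilon^2\delta e_2)$ have equal norm. Define $\psi:\mathbb R^{2\times2}\to[0,\infty)$ by $\psi(X)=0$ if $\Lambda M(X)$ is a positive multiple of some $v_i$, $i\in\{1,2,3\}$, and $\psi(X)=\|\Lambda M(X)\|$ otherwise; $\bar\psi(Y)=\sum_{i=1}^q\psi(Y_i)$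 for $Y=\sum_{i=1}^q[Y_i]\in\mathcal A_q(\mathbb R^{2\times2})$. For $q\le Q$ and $(a,X)\in\mathcal A_q(\mathbb R^2\times\mathbb R^{2\times2})$, $A^q(a,X)=\inf\{\fint_D\bar\psi(\nabla\varphi):\varphi\in\mathcal T(a,X,D)\}$ (with $Q$ replaced by $q$ in the definition of $\mathcal T$), and $A:=A^Q$; $A$ is a $Q$-integrand (invariant under simultaneous permutations of the pairs $(a_i,X_i)$). *)

theory Defs
  imports "HOL-Analysis.Analysis" "HOL-Library.Multiset"
begin

type_synonym pt2 = "real^2"
type_synonym mat2 = "real^2^2"
type_synonym qpt = "(real^2) \<times> (real^2^2)"

definition Gdist :: "'a::real_normed_vector multiset \<Rightarrow> 'a multiset \<Rightarrow> real" where
  "Gdist p p' = Inf {sqrt (\<Sum>i<size p. (norm (xs!i - ys!i))^2) | xs ys. mset xs = p \<and> mset ys = p'}"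

definition qlip :: "nat \<Rightarrow> 'b::metric_space set \<Rightarrow> ('b \<Rightarrow> 'a::real_normed_vector multiset) \<Rightarrow> bool" where
  "qlip q S f \<longleftrightarrow> (\<forall>x\<in>S. size (f x) = q) \<and> (\<exists>L. \<forall>x\<in>S. \<forall>y\<in>S. Gdist (f x) (f y) \<le> L * dist x y)"

text \<open>Differentiability of a Q-valued map (De Lellis--Spadaro): first-order approximation
  T = sum of [(f_i(x0), L_i)], with L_i = L_j whenever f_i(x0) = f_j(x0).\<close>
definition is_qdiff :: "(pt2 \<Rightarrow> pt2 multiset) \<Rightarrow> pt2 \<Rightarrow> (pt2 \<times> mat2) multiset \<Rightarrow> bool" where
  "is_qdiff f x0 T \<longleftrightarrow> image_mset fst T = f x0 \<and>
     (\<forall>u\<in>set_mset T. \<forall>w\<in>set_mset T. fst u = fst w \<longrightarrow> snd u = snd w) \<and>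
     ((\<lambda>x. Gdist (f x) (image_mset (\<lambda>(v, L). v + L *v (x - x0)) T) / norm (x - x0)) \<longlongrightarrow> 0) (at x0)"

text \<open>Gradient (a Q-point of 2x2 matrices); irrelevant value at non-differentiability points.\<close>
definition qgrad :: "(pt2 \<Rightarrow> pt2 multiset) \<Rightarrow> pt2 \<Rightarrow> mat2 multiset" where
  "qgrad f x0 = (if \<exists>T. is_qdiff f x0 T then image_mset snd (SOME T. is_qdiff f x0 T) else {#})"

text \<open>Vectors of R^4 as functions on indices 1..4; 2-vectors as coefficient functions
  on pairs (i,j), 1 <= i < j <= 4, in the basis e_i wedge e_j.\<close>
definition ev :: "nat \<Rightarrow> nat \<Rightarrow> real" where
  "ev k = (\<lambda>i. if i = k then 1 else 0)"

definition wedge :: "(nat \<Rightarrow> real) \<Rightarrow> (nat \<Rightarrow> real) \<Rightarrow> (nat \<times> nat \<Rightarrow> real)" where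
  "wedge u w = (\<lambda>(i, j). u i * w j - u j * w i)"

definition widx :: "(nat \<times> nat) set" where
  "widx = {(i, j). 1 \<le> i \<and> i < j \<and> j \<le> 4}"

definition wnorm :: "(nat \<times> nat \<Rightarrow> real) \<Rightarrow> real" where
  "wnorm W = sqrt (\<Sum>ij\<in>widx. (W ij)^2)"

definition pos_mult :: "(nat \<times> nat \<Rightarrow> real) \<Rightarrow> (nat \<times> nat \<Rightarrow> real) \<Rightarrow> bool" where
  "pos_mult W V \<longleftrightarrow> (\<exists>c>0. \<forall>ij\<in>widx. W ij = c * V ij)"

definition LM :: "mat2 \<Rightarrow> (nat \<times> nat \<Rightarrow> real)" where
  "LM X = wedge (\<lambda>i. ev 1 i + X$1$1 * ev 3 i + X$2$1 * ev 4 i)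
                (\<lambda>i. ev 2 i + X$1$2 * ev 3 i + X$2$2 * ev 4 i)"

definition v1 :: "real \<Rightarrow> real \<Rightarrow> (nat \<times> nat \<Rightarrow> real)" where
  "v1 eps d = wedge (\<lambda>i. d * ev 1 i + 1/2 * (ev 3 i + eps^2 * d * ev 2 i))
                    (\<lambda>i. d * ev 2 i + 1/2 * (ev 4 i + eps^2 * d * ev 1 i))"

definition v2 :: "real \<Rightarrow> real \<Rightarrow> (nat \<times> nat \<Rightarrow> real)" where
  "v2 eps d = wedge (\<lambda>i. d * ev 1 i - 1/2 * (ev 3 i + eps^2 * d * ev 2 i))
                    (\<lambda>i. d * ev 2 i - 1/2 * (ev 4 i + eps^2 * d * ev 1 i))"

definition v3 :: "real \<Rightarrow> real \<Rightarrow> (nat \<times> nat \<Rightarrow> real)" where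
  "v3 eps d = wedge (\<lambda>i. 1/2 * (ev 4 i + eps^2 * d * ev 1 i))
                    (\<lambda>i. ev 3 i + eps^2 * d * ev 2 i)"

definition psi :: "real \<Rightarrow> real \<Rightarrow> mat2 \<Rightarrow> real" where
  "psi eps d X = (if pos_mult (LM X) (v1 eps d) \<or> pos_mult (LM X) (v2 eps d) \<or> pos_mult (LM X) (v3 eps d)
                  then 0 else wnorm (LM X))"

definition psibar :: "real \<Rightarrow> real \<Rightarrow> mat2 multiset \<Rightarrow> real" where
  "psibar eps d Y = sum_mset (image_mset (psi eps d) Y)"

definition Dsq :: "pt2 set" where
  "Dsq = box (\<chi> i. - 1/2) (\<chi> i. 1/2)"

text \<open>The class T(a,X,U), indexing the maximal decomposition by the distinct points y of p
  (with multiplicity count p y).\<close>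
definition Tset :: "qpt multiset \<Rightarrow> pt2 set \<Rightarrow> (pt2 \<Rightarrow> pt2 multiset) set" where
  "Tset p U = {\<phi>. qlip (size p) (closure U) \<phi> \<and>
     (\<exists>\<Phi>. (\<forall>y\<in>set_mset p. qlip (count p y) (closure U) (\<Phi> y) \<and>
              (\<forall>x\<in>frontier U. \<Phi> y x = replicate_mset (count p y) (fst y + snd y *v x))) \<and>
           (\<forall>x\<in>closure U. \<phi> x = (\<Sum>y\<in>set_mset p. \<Phi> y x)))}"

definition Aq :: "real \<Rightarrow> real \<Rightarrow> qpt multiset \<Rightarrow> ennreal" where
  "Aq eps d p = (INF \<phi>\<in>Tset p Dsq.
      (\<integral>\<^sup>+x\<in>Dsq. ennreal (psibar eps d (qgrad \<phi> x)) \<partial>lborel) / emeasure lborel Dsq)"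

definition same_max_mult :: "'a multiset \<Rightarrow> 'a multiset \<Rightarrow> bool" where
  "same_max_mult p p' \<longleftrightarrow>
     image_mset (count p) (mset_set (set_mset p)) = image_mset (count p') (mset_set (set_mset p'))"

definition Xnorm :: "qpt multiset \<Rightarrow> real" where
  "Xnorm p = Gdist (image_mset snd p) (replicate_mset (size p) 0)"

end

theory Submission
  imports Defs
begin

text \<open>
  Lower semicontinuity and continuity come from one transfer estimate. Suppose
  \<open>p = \<pi>(q)\<close> with every point of \<open>q\<close> moved by at most \<open>\<rho>\<close> and all points of norm
  at most \<open>R\<close>. A competitor for \<open>q\<close> on the unit square \<open>D\<close>, rescaled into the
  concentric square of side \<open>\<lambda> < 1\<close>, has the same gradients at corresponding
  points, so its cost does not increase. On the annulus between the two squares each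
  affine sheet \<open>a + X x\<close> of \<open>q\<close> is interpolated linearly, in the distance to the
  boundary, to the sheet of its image under \<open>\<pi>\<close>; this gives a competitor for \<open>p\<close>,
  Lipschitz with constant \<open>O(R + \<rho>/(1-\<lambda>))\<close> on the annulus. As
  \<open>\<psi>(X) \<le> |\<Lambda>M(X)| \<le> 1 + 2 max |X\<^sub>i\<^sub>j|\<^sup>2\<close>, the extra cost is
  \<open>O((1-\<lambda>\<^sup>2)(1 + (R + \<rho>/(1-\<lambda>))\<^sup>2))\<close>, which is small when \<open>\<lambda> = 1 - \<rho>\<close> and \<open>\<rho>\<close>
  is small.

  If \<open>q\<close> is \<open>\<G>\<close>-close to \<open>p\<close>, an optimal matching sends \<open>q\<close> onto \<open>p\<close>, giving
  \<open>A(p) \<le> A(q) + o(1)\<close>. If moreover the maximal multiplicities agree, this map is a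
  bijection of the distinct points and can be inverted, giving the reverse inequality.
  The growth bound is the cost of the affine competitor. Only \<open>0 \<le> \<psi>(X) \<le> |\<Lambda>M(X)|\<close>
  is used.
\<close>

section \<open>The metric G on unordered tuples\<close>

definition l2_list_dist :: "'a::real_normed_vector list \<Rightarrow> 'a list \<Rightarrow> real" where
  "l2_list_dist xs ys = L2_set (\<lambda>i. norm (xs!i - ys!i)) {..<length xs}"

definition matching_costs :: "'a::real_normed_vector multiset \<Rightarrow> 'a multiset \<Rightarrow> real set" where
  "matching_costs p q = {l2_list_dist xs ys | xs ys. mset xs = p \<and> mset ys = q}"

lemma Gdist_eq_Inf: "Gdist p q = Inf (matching_costs p q)"
proof -
  have "{sqrt (\<Sum>i<size p. (norm (xs!i - ys!i))^2) | xs ys. mset xs = p \<and> mset ys = q} = matching_costs p q"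
    unfolding matching_costs_def l2_list_dist_def L2_set_def by (auto; metis size_mset)
  then show ?thesis unfolding Gdist_def by simp
qed

lemma l2_list_dist_nonneg: "0 \<le> l2_list_dist xs ys"
  unfolding l2_list_dist_def by (rule L2_set_nonneg)

lemma finite_matching_costs: "finite (matching_costs p q)"
proof -
  have f: "finite {xs. mset xs = p}" for p :: "'a multiset"
    by (rule finite_subset[OF _ finite_lists_length_eq[of "set_mset p" "size p"]]) auto
  have "matching_costs p q = (\<lambda>(xs,ys). l2_list_dist xs ys) ` ({xs. mset xs = p} \<times> {ys. mset ys = q})"
    unfolding matching_costs_def by auto
  then show ?thesis using f by simp
qed

lemma Gdist_le_l2_list_dist: "mset xs = p \<Longrightarrow> mset ys = q \<Longrightarrow> Gdist p q \<le> l2_list_dist xs ys"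
  unfolding Gdist_eq_Inf
  by (rule cInf_lower) (auto simp: matching_costs_def bdd_below_def intro!: exI[of _ 0] l2_list_dist_nonneg)

lemma Gdist_attained:
  assumes "size p = size q"
  shows "\<exists>xs ys. mset xs = p \<and> mset ys = q \<and> Gdist p q = l2_list_dist xs ys"
proof -
  obtain xs where "mset xs = p" using ex_mset by blast
  moreover obtain ys where "mset ys = q" using ex_mset by blast
  ultimately have ne: "matching_costs p q \<noteq> {}" unfolding matching_costs_def by auto
  have "Inf (matching_costs p q) \<in> matching_costs p q"
    using cInf_eq_Min[OF finite_matching_costs ne] Min_in[OF finite_matching_costs ne] by simp
  then show ?thesis unfolding Gdist_eq_Inf matching_costs_def by auto
qed

lemma Gdist_nonneg: "size p = size q \<Longrightarrow> 0 \<le> Gdist p q"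
  using Gdist_attained l2_list_dist_nonneg by metis

lemma Gdist_self: "Gdist p p = 0"
proof -
  obtain xs where "mset xs = p" using ex_mset by blast
  then have "Gdist p p \<le> l2_list_dist xs xs" using Gdist_le_l2_list_dist by blast
  also have "l2_list_dist xs xs = 0" unfolding l2_list_dist_def by (simp add: L2_set_def)
  finally show ?thesis using Gdist_nonneg[of p p] by simp
qed

lemma norm_nth_diff_le_l2_list_dist: "i < length xs \<Longrightarrow> norm (xs!i - ys!i) \<le> l2_list_dist xs ys"
  unfolding l2_list_dist_def by (rule member_le_L2_set) auto

lemma Gdist_greatest:
  assumes "size p = size q" "\<And>xs ys. mset xs = p \<Longrightarrow> mset ys = q \<Longrightarrow> c \<le> l2_list_dist xs ys"
  shows "c \<le> Gdist p q"
  using Gdist_attained[OF assms(1)] assms(2) by metis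

lemma l2_list_dist_swap: "length xs = length ys \<Longrightarrow> l2_list_dist xs ys = l2_list_dist ys xs"
  unfolding l2_list_dist_def by (simp add: norm_minus_commute)

lemma Gdist_sym: "size p = size q \<Longrightarrow> Gdist p q = Gdist q p"
proof -
  assume s: "size p = size q"
  have sw: "l2_list_dist xs ys = l2_list_dist ys xs" if "mset xs = p" "mset ys = q" for xs ys
    using that s by (metis l2_list_dist_swap size_mset)
  have "matching_costs p q = matching_costs q p"
    unfolding matching_costs_def by (auto; metis sw)
  then show ?thesis by (simp add: Gdist_eq_Inf)
qed

lemma l2_list_dist_realign:
  assumes "length xs = length ys" "mset ys = mset ys'"
  shows "\<exists>xs'. mset xs' = mset xs \<and> length xs' = length xs \<and> l2_list_dist xs' ys' = l2_list_dist xs ys"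
proof -
  obtain f where f: "f permutes {..<length ys}" "permute_list f ys = ys'"
    using mset_eq_permutation[of ys' ys] assms(2) by metis
  define xs' where "xs' = permute_list f xs"
  have f2: "f permutes {..<length xs}" using f(1) assms(1) by simp
  have "l2_list_dist xs' ys' = L2_set (\<lambda>i. norm (xs!(f i) - ys!(f i))) {..<length xs}"
    unfolding l2_list_dist_def xs'_def f(2)[symmetric]
    by (rule L2_set_cong) (auto simp: permute_list_nth f2 f(1) assms(1))
  also have "\<dots> = l2_list_dist xs ys"
    unfolding l2_list_dist_def L2_set_def
    using sum.permute[OF f2, of "\<lambda>i. (norm (xs!i - ys!i))^2"] by (simp add: comp_def)
  finally show ?thesis using f2 by (auto simp: xs'_def mset_permute_list[OF f2] intro!: exI[of _ "permute_list f xs"])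
qed

lemma Gdist_triangle:
  assumes "size p = size q" "size q = size r"
  shows "Gdist p r \<le> Gdist p q + Gdist q r"
proof -
  obtain xs ys where 1: "mset xs = p" "mset ys = q" "Gdist p q = l2_list_dist xs ys"
    using Gdist_attained[OF assms(1)] by blast
  obtain ys' zs where 2: "mset ys' = q" "mset zs = r" "Gdist q r = l2_list_dist ys' zs"
    using Gdist_attained[OF assms(2)] by blast
  have l: "length xs = length ys" using 1 assms by (metis size_mset)
  obtain xs' where 3: "mset xs' = p" "length xs' = length xs" "l2_list_dist xs' ys' = l2_list_dist xs ys"
    using l2_list_dist_realign[OF l, of ys'] 1 2 by auto
  have l2: "length xs' = length ys'" "length ys' = length zs" using 1 2 3 assms l
    by (metis size_mset)+
  have "Gdist p r \<le> l2_list_dist xs' zs" using Gdist_le_l2_list_dist 3 2 by blast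
  also have "\<dots> \<le> L2_set (\<lambda>i. norm (xs'!i - ys'!i) + norm (ys'!i - zs!i)) {..<length xs'}"
    unfolding l2_list_dist_def by (rule L2_set_mono) (use norm_triangle_ineq[of "xs'!i - ys'!i" "ys'!i - zs!i" for i] in auto)
  also have "\<dots> \<le> l2_list_dist xs' ys' + l2_list_dist ys' zs"
    unfolding l2_list_dist_def using l2 by (simp add: L2_set_triangle_ineq)
  finally show ?thesis using 1 2 3 by simp
qed

lemma sum_lessThan_add: "(\<Sum>i<a+b. f i) = (\<Sum>i<a. f i) + (\<Sum>i<b. f (a + i::nat))"
  by (induct b) (auto simp: add.assoc)

lemma l2_list_dist_append_le:
  assumes "length xs1 = length ys1"
  shows "l2_list_dist (xs1 @ xs2) (ys1 @ ys2) \<le> l2_list_dist xs1 ys1 + l2_list_dist xs2 ys2"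
proof -
  let ?f = "\<lambda>i. (norm ((xs1@xs2)!i - (ys1@ys2)!i))^2"
  have "(\<Sum>i<length (xs1@xs2). ?f i) = (\<Sum>i<length xs1. ?f i) + (\<Sum>i<length xs2. ?f (length xs1 + i))"
    by (simp add: sum_lessThan_add)
  also have "\<dots> = (\<Sum>i<length xs1. (norm (xs1!i - ys1!i))^2) + (\<Sum>i<length xs2. (norm (xs2!i - ys2!i))^2)"
    using assms by (simp add: nth_append)
  finally show ?thesis unfolding l2_list_dist_def L2_set_def
    by (metis (no_types, lifting) sum_nonneg zero_le_power2 sqrt_add_le_add_sqrt)
qed

lemma Gdist_add_le:
  assumes "size p1 = size q1" "size p2 = size q2"
  shows "Gdist (p1 + p2) (q1 + q2) \<le> Gdist p1 q1 + Gdist p2 q2"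
proof -
  obtain xs1 ys1 where 1: "mset xs1 = p1" "mset ys1 = q1" "Gdist p1 q1 = l2_list_dist xs1 ys1"
    using Gdist_attained[OF assms(1)] by blast
  obtain xs2 ys2 where 2: "mset xs2 = p2" "mset ys2 = q2" "Gdist p2 q2 = l2_list_dist xs2 ys2"
    using Gdist_attained[OF assms(2)] by blast
  have "Gdist (p1 + p2) (q1 + q2) \<le> l2_list_dist (xs1@xs2) (ys1@ys2)"
    using 1 2 by (intro Gdist_le_l2_list_dist) auto
  also have "\<dots> \<le> l2_list_dist xs1 ys1 + l2_list_dist xs2 ys2"
    using 1 assms by (intro l2_list_dist_append_le) (metis size_mset)
  finally show ?thesis using 1 2 by simp
qed

lemma Gdist_sum_le:
  assumes "finite S" "\<forall>z\<in>S. size (A z) = size (B z)"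
  shows "Gdist (\<Sum>z\<in>S. A z) (\<Sum>z\<in>S. B z) \<le> (\<Sum>z\<in>S. Gdist (A z) (B z))"
  using assms
proof (induct S rule: finite_induct)
  case empty
  show ?case using Gdist_le_l2_list_dist[of "[]" "{#}" "[]" "{#}"] by (simp add: l2_list_dist_def)
next
  case (insert x F)
  have "Gdist (\<Sum>z\<in>insert x F. A z) (\<Sum>z\<in>insert x F. B z) = Gdist (A x + (\<Sum>z\<in>F. A z)) (B x + (\<Sum>z\<in>F. B z))"
    using insert by simp
  also have "\<dots> \<le> Gdist (A x) (B x) + Gdist (\<Sum>z\<in>F. A z) (\<Sum>z\<in>F. B z)"
    using insert by (intro Gdist_add_le) auto
  also have "\<dots> \<le> Gdist (A x) (B x) + (\<Sum>z\<in>F. Gdist (A z) (B z))"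
    using insert by simp
  finally show ?case using insert by simp
qed

lemma Gdist_replicate_le: "Gdist (replicate_mset n a) (replicate_mset n b) \<le> real n * norm (a - b)"
proof -
  have "Gdist (replicate_mset n a) (replicate_mset n b) \<le> l2_list_dist (replicate n a) (replicate n b)"
    by (rule Gdist_le_l2_list_dist) auto
  also have "\<dots> = L2_set (\<lambda>x. norm (a - b)) {..<n}"
    unfolding l2_list_dist_def by (rule L2_set_cong) auto
  also have "\<dots> = sqrt (real n) * norm (a - b)"
    by (simp add: L2_set_constant)
  also have "\<dots> \<le> real n * norm (a - b)"
  proof (cases "n = 0")
    case False
    then have "sqrt (real n) \<le> real n" by (simp add: real_sqrt_le_iff' power2_eq_square le_square)
    then show ?thesis by (simp add: mult_right_mono)
  qed simp
  finally show ?thesis .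
qed

lemma Gdist_image_mset_le:
  assumes "size p = size q" "0 \<le> c" "\<And>u v. u \<in># p \<Longrightarrow> v \<in># q \<Longrightarrow> norm (f u - f v) \<le> c * norm (u - v)"
  shows "Gdist (image_mset f p) (image_mset f q) \<le> c * Gdist p q"
proof -
  obtain xs ys where 1: "mset xs = p" "mset ys = q" "Gdist p q = l2_list_dist xs ys"
    using Gdist_attained[OF assms(1)] by blast
  have l: "length xs = length ys" using 1 assms by (metis size_mset)
  have "Gdist (image_mset f p) (image_mset f q) \<le> l2_list_dist (map f xs) (map f ys)"
    using 1 by (intro Gdist_le_l2_list_dist) auto
  also have "\<dots> \<le> L2_set (\<lambda>i. c * norm (xs!i - ys!i)) {..<length xs}"
    unfolding l2_list_dist_def length_map using l 1 by (intro L2_set_mono) (auto intro!: assms(3))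
  also have "\<dots> = c * l2_list_dist xs ys" unfolding l2_list_dist_def by (rule L2_set_right_distrib[OF assms(2), symmetric])
  finally show ?thesis using 1 by simp
qed

lemma finite_separated:
  assumes "finite (P :: 'a::metric_space set)"
  shows "\<exists>s>0. \<forall>y\<in>P. \<forall>y'\<in>P. y \<noteq> y' \<longrightarrow> s \<le> dist y y'"
proof -
  let ?D = "(\<lambda>(y,y'). dist y y') ` {(y,y'). y \<in> P \<and> y' \<in> P \<and> y \<noteq> y'}"
  have "{(y,y'). y \<in> P \<and> y' \<in> P \<and> y \<noteq> y'} \<subseteq> P \<times> P" by auto
  then have fin: "finite ?D" using assms by (meson finite_SigmaI finite_imageI finite_subset)
  show ?thesis
  proof (cases "?D = {}")
    case True
    then show ?thesis by (intro exI[of _ 1]) auto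
  next
    case False
    have "Min ?D \<in> ?D" using Min_in[OF fin False] .
    then have pos: "Min ?D > 0" by auto
    show ?thesis
      by (intro exI[of _ "Min ?D"] conjI pos ballI impI Min_le[OF fin]) auto
  qed
qed

lemma image_mset_of_Gdist_small:
  fixes p q :: "'a::real_normed_vector multiset"
  assumes sz: "size q = size p" and s: "s > 0" "\<forall>y\<in>#p. \<forall>y'\<in>#p. y \<noteq> y' \<longrightarrow> s \<le> dist y y'"
    and G: "Gdist q p < s / 2"
  shows "\<exists>\<pi>. p = image_mset \<pi> q \<and> (\<forall>z\<in>#q. norm (z - \<pi> z) \<le> Gdist q p)"
proof -
  obtain xs ys where 1: "mset xs = q" "mset ys = p" "Gdist q p = l2_list_dist xs ys"
    using Gdist_attained[OF sz] by blast
  have len: "length xs = length ys" using 1 sz by (metis size_mset)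
  have close: "norm (xs!i - ys!i) \<le> Gdist q p" if "i < length xs" for i
    using norm_nth_diff_le_l2_list_dist[OF that] 1 by simp
  \<comment> \<open>By the separation of \<open>p\<close>, an optimal matching pairs each point of \<open>q\<close> with its unique \<open>s/2\<close>-neighbour in \<open>p\<close>.\<close>
  define \<pi> where "\<pi> z = (SOME y. y \<in># p \<and> norm (z - y) < s/2)" for z
  have \<pi>i: "\<pi> (xs!i) = ys!i" if i: "i < length xs" for i
  proof -
    have yi: "ys!i \<in># p" using 1 len i by (metis nth_mem set_mset_mset)
    have "norm (xs!i - ys!i) < s/2" using close[OF i] G by linarith
    then have ex: "\<exists>y. y \<in># p \<and> norm (xs!i - y) < s/2" using yi by blast
    have y': "\<pi> (xs!i) \<in># p \<and> norm (xs!i - \<pi> (xs!i)) < s/2"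
      unfolding \<pi>_def by (rule someI_ex[OF ex])
    have "dist (\<pi> (xs!i)) (ys!i) \<le> norm (\<pi> (xs!i) - xs!i) + norm (xs!i - ys!i)"
      unfolding dist_norm using norm_triangle_ineq[of "\<pi> (xs!i) - xs!i" "xs!i - ys!i"] by simp
    also have "\<dots> < s" using y' close[OF i] G by (simp add: norm_minus_commute)
    finally have "dist (\<pi> (xs!i)) (ys!i) < s" .
    then show ?thesis using s(2) y' yi by force
  qed
  have "map \<pi> xs = ys" using len \<pi>i by (intro nth_equalityI) auto
  then have "p = image_mset \<pi> q" using 1 by (metis mset_map)
  moreover have "\<forall>z\<in>#q. norm (z - \<pi> z) \<le> Gdist q p"
  proof
    fix z assume "z \<in># q"
    then obtain i where "i < length xs" "xs!i = z" using 1 by (metis in_set_conv_nth set_mset_mset)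
    then show "norm (z - \<pi> z) \<le> Gdist q p" using close \<pi>i by auto
  qed
  ultimately show ?thesis by blast
qed

lemma same_max_mult_image_mset_inverse:
  assumes p: "p = image_mset \<pi> q" and same: "same_max_mult q p"
  obtains \<rho> where "q = image_mset \<rho> p" and "\<And>y. y \<in># p \<Longrightarrow> \<rho> y \<in># q \<and> \<pi> (\<rho> y) = y"
proof
  have "card (set_mset q) = card (set_mset p)"
    using arg_cong[OF same[unfolded same_max_mult_def], of size] by simp
  then have inj: "inj_on \<pi> (set_mset q)"
    using p by (simp add: inj_on_iff_eq_card)
  have "image_mset (inv_into (set_mset q) \<pi>) p = image_mset (inv_into (set_mset q) \<pi> \<circ> \<pi>) q"
    using p by (simp add: multiset.map_comp)
  also have "\<dots> = image_mset id q"
    by (rule image_mset_cong) (simp add: inv_into_f_f[OF inj])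
  finally show "q = image_mset (inv_into (set_mset q) \<pi>) p" by simp
  fix y assume "y \<in># p"
  then have "y \<in> \<pi> ` set_mset q" using p by simp
  then show "inv_into (set_mset q) \<pi> y \<in># q \<and> \<pi> (inv_into (set_mset q) \<pi> y) = y"
    by (simp add: inv_into_into f_inv_into_f)
qed

lemma image_mset_sum: "finite S \<Longrightarrow> image_mset f (\<Sum>z\<in>S. A z) = (\<Sum>z\<in>S. image_mset f (A z))"
  by (induct S rule: finite_induct) auto

lemma replicate_mset_add: "replicate_mset (a + b) w = replicate_mset a w + replicate_mset b w"
  by (induct a) auto

lemma sum_replicate_mset: "finite S \<Longrightarrow> (\<Sum>z\<in>S. replicate_mset (n z) w) = replicate_mset (\<Sum>z\<in>S. n z) w"
  by (induct S rule: finite_induct) (auto simp: replicate_mset_add)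

lemma Gdist_lipschitz_sum:
  assumes "finite F"
    and size: "\<And>z x. z \<in> F \<Longrightarrow> x \<in> S \<Longrightarrow> size (A z x) = n z"
    and lip: "\<And>z x y. z \<in> F \<Longrightarrow> x \<in> S \<Longrightarrow> y \<in> S \<Longrightarrow> Gdist (A z x) (A z y) \<le> L z * dist x y"
    and "x \<in> S" "y \<in> S"
  shows "Gdist (\<Sum>z\<in>F. A z x) (\<Sum>z\<in>F. A z y) \<le> (\<Sum>z\<in>F. L z) * dist x y"
proof -
  have "Gdist (\<Sum>z\<in>F. A z x) (\<Sum>z\<in>F. A z y) \<le> (\<Sum>z\<in>F. Gdist (A z x) (A z y))"
    using assms by (intro Gdist_sum_le) auto
  also have "\<dots> \<le> (\<Sum>z\<in>F. L z * dist x y)"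
    using assms by (intro sum_mono lip)
  finally show ?thesis by (simp add: sum_distrib_right)
qed

lemma Gdist_lipschitz_glue:
  fixes f :: "'b::euclidean_space \<Rightarrow> 'a::real_normed_vector multiset" and m :: "'b \<Rightarrow> real"
  assumes S: "convex S" and m: "continuous_on S m"
    and sz: "\<forall>x\<in>S. size (f x) = n"
    and L1: "\<forall>x\<in>S. \<forall>y\<in>S. m x \<le> c \<and> m y \<le> c \<longrightarrow> Gdist (f x) (f y) \<le> K * dist x y"
    and L2: "\<forall>x\<in>S. \<forall>y\<in>S. c \<le> m x \<and> c \<le> m y \<longrightarrow> Gdist (f x) (f y) \<le> K * dist x y"
  shows "\<forall>x\<in>S. \<forall>y\<in>S. Gdist (f x) (f y) \<le> K * dist x y"
proof (intro ballI)
  fix x y assume x: "x \<in> S" and y: "y \<in> S"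
  show "Gdist (f x) (f y) \<le> K * dist x y"
  proof (cases "(m x \<le> c \<and> m y \<le> c) \<or> (c \<le> m x \<and> c \<le> m y)")
    case True then show ?thesis using L1 L2 x y by auto
  next
    case False
    have seg: "closed_segment x y \<subseteq> S" using S x y unfolding convex_contains_segment by blast
    then have "connected (m ` closed_segment x y)"
      by (intro connected_continuous_image continuous_on_subset[OF m]) auto
    then have ivt: "z \<in> m ` closed_segment x y"
      if "a \<in> m ` closed_segment x y" "b \<in> m ` closed_segment x y" "a \<le> z" "z \<le> b" for a b z
      using that unfolding connected_iff_interval by blast
    have "m x \<in> m ` closed_segment x y" "m y \<in> m ` closed_segment x y" by auto
    then have "c \<in> m ` closed_segment x y"
      using ivt[of "m x" "m y" c] ivt[of "m y" "m x" c] False by (cases "m x \<le> c") auto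
    then obtain w where w: "w \<in> closed_segment x y" "m w = c" by blast
    then have "w \<in> S" using seg by auto
    have "dist x y = dist x w + dist w y"
      using w(1) between[of x y w] by (simp add: between_mem_segment)
    have "Gdist (f x) (f y) \<le> Gdist (f x) (f w) + Gdist (f w) (f y)"
      by (rule Gdist_triangle) (use sz x y \<open>w \<in> S\<close> in auto)
    also have "Gdist (f x) (f w) \<le> K * dist x w"
      using L1 L2 x \<open>w \<in> S\<close> w(2) by (cases "m x \<le> c") auto
    also have "Gdist (f w) (f y) \<le> K * dist w y"
      using L1 L2 y \<open>w \<in> S\<close> w(2) by (cases "m y \<le> c") auto
    finally show ?thesis using \<open>dist x y = dist x w + dist w y\<close> by (simp add: distrib_left)
  qed
qed

lemma qlip_nonneg_constant:
  assumes "qlip q S f"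
  shows "\<exists>L\<ge>0. \<forall>x\<in>S. \<forall>y\<in>S. Gdist (f x) (f y) \<le> L * dist x y"
proof -
  obtain L where L: "\<forall>x\<in>S. \<forall>y\<in>S. Gdist (f x) (f y) \<le> L * dist x y" using assms unfolding qlip_def by blast
  have "\<forall>x\<in>S. \<forall>y\<in>S. Gdist (f x) (f y) \<le> max L 0 * dist x y"
    using L by (metis (no_types, opaque_lifting) dual_order.trans le_max_iff_disj mult_right_mono zero_le_dist order.refl)
  then show ?thesis by (intro exI[of _ "max L 0"]) auto
qed

section \<open>Differentials of Q-valued maps\<close>

lemma norm_matrix_vector_mult_le: "norm ((X::real^'n^'m) *v v) \<le> norm X * norm v"
proof -
  have comp: "(X *v v) $ i = X $ i \<bullet> v" for i
    by (simp add: matrix_vector_mult_def inner_vec_def)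
  have "norm (X *v v) = L2_set (\<lambda>i. norm ((X *v v) $ i)) UNIV" by (simp add: norm_vec_def)
  also have "\<dots> \<le> L2_set (\<lambda>i. norm v * norm (X $ i)) UNIV"
  proof (rule L2_set_mono)
    fix i show "norm ((X *v v) $ i) \<le> norm v * norm (X $ i)"
      using Cauchy_Schwarz_ineq2[of "X $ i" v] by (simp add: comp mult.commute)
  qed simp
  also have "\<dots> = norm v * norm X"
    by (simp add: norm_vec_def L2_set_right_distrib)
  finally show ?thesis by (simp add: mult.commute)
qed

definition qaff :: "(pt2 \<times> mat2) multiset \<Rightarrow> pt2 \<Rightarrow> pt2 multiset" where
  "qaff T u = image_mset (\<lambda>(v, L). v + L *v u) T"

definition consistent_jet :: "(pt2 \<times> mat2) multiset \<Rightarrow> bool" where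
  "consistent_jet T \<longleftrightarrow> (\<forall>u\<in>set_mset T. \<forall>w\<in>set_mset T. fst u = fst w \<longrightarrow> snd u = snd w)"

lemma is_qdiff_iff: "is_qdiff f x0 T \<longleftrightarrow> image_mset fst T = f x0 \<and> consistent_jet T \<and>
   ((\<lambda>x. Gdist (f x) (qaff T (x - x0)) / norm (x - x0)) \<longlongrightarrow> 0) (at x0)"
  unfolding is_qdiff_def qaff_def consistent_jet_def by simp

lemma size_qaff [simp]: "size (qaff T u) = size T"
  by (simp add: qaff_def)

lemma is_qdiffD:
  assumes "is_qdiff f x0 T" "e > 0"
  shows "\<exists>r>0. \<forall>x. x \<noteq> x0 \<and> norm (x - x0) < r \<longrightarrow> Gdist (f x) (qaff T (x - x0)) < e * norm (x - x0)"
proof -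
  obtain r where r: "r > 0" "\<forall>x. x \<noteq> x0 \<and> norm (x - x0) < r \<longrightarrow> norm (Gdist (f x) (qaff T (x - x0)) / norm (x - x0) - 0) < e"
    using assms unfolding is_qdiff_iff LIM_eq by blast
  show ?thesis
  proof (intro exI[of _ r] conjI allI impI)
    fix x assume x: "x \<noteq> x0 \<and> norm (x - x0) < r"
    then have n: "norm (x - x0) > 0" by simp
    have a: "\<bar>Gdist (f x) (qaff T (x - x0))\<bar> / norm (x - x0) < e" using r x by auto
    have "Gdist (f x) (qaff T (x - x0)) / norm (x - x0) \<le> \<bar>Gdist (f x) (qaff T (x - x0))\<bar> / norm (x - x0)"
      by (rule divide_right_mono) auto
    then have "Gdist (f x) (qaff T (x - x0)) / norm (x - x0) < e" using a by linarith
    then show "Gdist (f x) (qaff T (x - x0)) < e * norm (x - x0)" using n by (simp add: divide_less_eq)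
  qed (use r in auto)
qed

lemma sheet_point_dist_ge:
  assumes "consistent_jet T" and "(v, L') \<in># T" and "(w, A) \<in># T"
    and sep: "v \<noteq> w \<Longrightarrow> s \<le> norm (v - w)"
    and M: "norm (L *v h) \<le> M" "norm (L' *v h) \<le> M" "norm (A *v h) \<le> M"
    and t: "0 < t" "4 * (t * M) < s"
  shows "t * norm (L *v h - L' *v h) \<le> norm ((v + L *v (t *\<^sub>R h)) - (w + A *v (t *\<^sub>R h)))"
proof (cases "w = v")
  case True
  then have "A = L'" using assms(1-3) unfolding consistent_jet_def by fastforce
  then have "(v + L *v (t *\<^sub>R h)) - (w + A *v (t *\<^sub>R h)) = t *\<^sub>R (L *v h - L' *v h)"
    using True by (simp add: matrix_vector_mult_scaleR algebra_simps)
  then show ?thesis using t by simp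
next
  case False
  let ?D = "(v + L *v (t *\<^sub>R h)) - (w + A *v (t *\<^sub>R h))"
  have "v - w = ?D - t *\<^sub>R (L *v h - A *v h)"
    by (simp add: matrix_vector_mult_scaleR algebra_simps)
  then have "norm (v - w) \<le> norm ?D + norm (t *\<^sub>R (L *v h - A *v h))"
    by (metis norm_triangle_ineq4)
  then have "s \<le> norm ?D + t * norm (L *v h - A *v h)"
    using sep False t(1) by auto
  moreover have "norm (L *v h - A *v h) \<le> 2 * M" "norm (L *v h - L' *v h) \<le> 2 * M"
    using M norm_triangle_ineq4[of "L *v h"] by (smt (verit))+
  then have "t * norm (L *v h - A *v h) \<le> 2 * (t * M)" "t * norm (L *v h - L' *v h) \<le> 2 * (t * M)"
    using t(1) mult_left_mono[of _ "2 * M" t] by (simp_all add: algebra_simps)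
  ultimately show ?thesis
    using t(2) by linarith
qed

text \<open>For small \<open>t\<close>, sheets through different base points stay apart, so any matching pairs
  the sheet \<open>(v, L)\<close> of \<open>T\<close> with the sheet through \<open>v\<close> of \<open>T'\<close>.\<close>

lemma Gdist_qaff_lower:
  assumes fst: "image_mset fst T = image_mset fst T'" and vL: "(v,L) \<in># T" and vL': "(v,L') \<in># T'"
    and cons: "consistent_jet T'"
  shows "\<exists>t0>0. \<forall>t. 0 < t \<and> t < t0 \<longrightarrow> t * norm (L *v h - L' *v h) \<le> Gdist (qaff T (t *\<^sub>R h)) (qaff T' (t *\<^sub>R h))"
proof -
  let ?P = "set_mset (image_mset fst T)"
  obtain s where s: "s > 0" "\<forall>y\<in>?P. \<forall>y'\<in>?P. y \<noteq> y' \<longrightarrow> s \<le> dist y y'"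
    using finite_separated[of ?P] by blast
  define M where "M = 1 + (\<Sum>u\<in>set_mset T \<union> set_mset T'. norm (snd u *v h))"
  have M: "norm (A *v h) \<le> M" if "(w,A) \<in># T \<or> (w,A) \<in># T'" for w A
    using member_le_sum[of "(w, A)" "set_mset T \<union> set_mset T'" "\<lambda>u. norm (snd u *v h)"] that
    unfolding M_def by auto
  have "0 < M" unfolding M_def by (simp add: add_pos_nonneg sum_nonneg)
  have sT: "size T = size T'" using fst by (metis size_image_mset)
  show ?thesis
  proof (intro exI[of _ "s / (4 * M)"] conjI allI impI)
    show "s / (4 * M) > 0" using s \<open>0 < M\<close> by simp
    fix t assume t: "0 < t \<and> t < s / (4 * M)"
    then have "4 * (t * M) < s" using \<open>0 < M\<close> by (simp add: field_simps)
    have sz: "size (qaff T (t *\<^sub>R h)) = size (qaff T' (t *\<^sub>R h))" using sT by simp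
    show "t * norm (L *v h - L' *v h) \<le> Gdist (qaff T (t *\<^sub>R h)) (qaff T' (t *\<^sub>R h))"
    proof (rule Gdist_greatest[OF sz])
      fix xs ys assume xs: "mset xs = qaff T (t *\<^sub>R h)" and ys: "mset ys = qaff T' (t *\<^sub>R h)"
      have "v + L *v (t *\<^sub>R h) \<in># qaff T (t *\<^sub>R h)" using vL unfolding qaff_def by force
      then obtain i where i: "i < length xs" "xs!i = v + L *v (t *\<^sub>R h)"
        using xs by (metis in_set_conv_nth set_mset_mset)
      have "length ys = length xs" using xs ys sz by (metis size_mset)
      then have "ys!i \<in># qaff T' (t *\<^sub>R h)" using ys i by (metis nth_mem set_mset_mset)
      then obtain w A where wA: "(w,A) \<in># T'" "ys!i = w + A *v (t *\<^sub>R h)" unfolding qaff_def by auto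
      have "v \<in> ?P" using vL by force
      moreover have "w \<in> ?P" using wA(1) fst by (metis image_eqI fst_conv set_image_mset)
      ultimately have "v \<noteq> w \<Longrightarrow> s \<le> norm (v - w)" using s(2) unfolding dist_norm by blast
      then have "t * norm (L *v h - L' *v h) \<le> norm (xs!i - ys!i)"
        unfolding i(2) wA(2) using cons vL' wA(1) M vL \<open>4 * (t * M) < s\<close> t
        by (intro sheet_point_dist_ge) auto
      also have "\<dots> \<le> l2_list_dist xs ys" by (rule norm_nth_diff_le_l2_list_dist[OF i(1)])
      finally show "t * norm (L *v h - L' *v h) \<le> l2_list_dist xs ys" .
    qed
  qed
qed

lemma qaff_zero_jet:
  "qaff (image_mset (\<lambda>(w,A). (w, 0::mat2)) T) u = image_mset fst T"
  unfolding qaff_def by (simp add: multiset.map_comp comp_def case_prod_beta)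

lemma is_qdiff_along:
  assumes d: "is_qdiff f x0 T" and "0 < e"
  shows "\<exists>r>0. \<forall>t. 0 < t \<and> t < r \<longrightarrow> Gdist (f (x0 + t *\<^sub>R h)) (qaff T (t *\<^sub>R h)) \<le> e * t"
proof (cases "h = 0")
  case True
  have "qaff T 0 = image_mset fst T" unfolding qaff_def by (rule image_mset_cong) auto
  then have "qaff T 0 = f x0" using d unfolding is_qdiff_iff by simp
  then show ?thesis using True \<open>0 < e\<close> by (auto simp: Gdist_self intro: exI[of _ 1])
next
  case False
  obtain r where r: "r > 0" "\<forall>x. x \<noteq> x0 \<and> norm (x - x0) < r \<longrightarrow> Gdist (f x) (qaff T (x - x0)) < (e / norm h) * norm (x - x0)"
    using is_qdiffD[OF d, of "e / norm h"] \<open>0 < e\<close> False by auto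
  show ?thesis
  proof (intro exI[of _ "r / norm h"] conjI allI impI)
    show "0 < r / norm h" using r(1) False by simp
    fix t assume t: "0 < t \<and> t < r / norm h"
    then have "x0 + t *\<^sub>R h \<noteq> x0" "norm ((x0 + t *\<^sub>R h) - x0) = t * norm h"
      using False by auto
    moreover have "t * norm h < r" using t False by (simp add: pos_less_divide_eq)
    ultimately have "Gdist (f (x0 + t *\<^sub>R h)) (qaff T (t *\<^sub>R h)) < e / norm h * (t * norm h)"
      using r(2)[rule_format, of "x0 + t *\<^sub>R h"] by simp
    then show "Gdist (f (x0 + t *\<^sub>R h)) (qaff T (t *\<^sub>R h)) \<le> e * t"
      using False by simp
  qed
qed

lemma scaled_point_in_ball: "0 \<le> t \<Longrightarrow> t < r / (norm h + 1) \<Longrightarrow> x0 + t *\<^sub>R h \<in> ball x0 r"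
proof -
  assume t: "0 \<le> t" "t < r / (norm h + 1)"
  have h: "0 < norm h + 1" using norm_ge_zero[of h] by linarith
  have "t * norm h \<le> t * (norm h + 1)" using t(1) by (simp add: mult_left_mono)
  also have "\<dots> < r" using t(2) by (simp add: pos_less_divide_eq[OF h])
  finally show ?thesis using t(1) by (simp add: dist_norm)
qed

lemma jet_diff_le:
  assumes "image_mset fst T = image_mset fst T'" "(v,L) \<in># T" "(v,L') \<in># T'" "consistent_jet T'"
    and close: "\<And>e. 0 < e \<Longrightarrow>
      \<exists>r>0. \<forall>t. 0 < t \<and> t < r \<longrightarrow> Gdist (qaff T (t *\<^sub>R h)) (qaff T' (t *\<^sub>R h)) \<le> (C + e) * t"
  shows "norm (L *v h - L' *v h) \<le> C"
proof (rule field_le_epsilon)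
  fix e :: real assume "0 < e"
  obtain t0 where t0: "t0 > 0"
    "\<forall>t. 0 < t \<and> t < t0 \<longrightarrow> t * norm (L *v h - L' *v h) \<le> Gdist (qaff T (t *\<^sub>R h)) (qaff T' (t *\<^sub>R h))"
    using Gdist_qaff_lower[OF assms(1-4)] by blast
  obtain r where r: "r > 0" "\<forall>t. 0 < t \<and> t < r \<longrightarrow> Gdist (qaff T (t *\<^sub>R h)) (qaff T' (t *\<^sub>R h)) \<le> (C + e) * t"
    using close[OF \<open>0 < e\<close>] by blast
  define t where "t = min t0 r / 2"
  have t: "0 < t" "t < t0" "t < r" unfolding t_def using t0(1) r(1) by auto
  have "t * norm (L *v h - L' *v h) \<le> Gdist (qaff T (t *\<^sub>R h)) (qaff T' (t *\<^sub>R h))"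
    using t0(2) t by blast
  also have "\<dots> \<le> (C + e) * t"
    using r(2) t by blast
  finally show "norm (L *v h - L' *v h) \<le> C + e"
    using t(1) by (simp add: mult.commute)
qed

lemma is_qdiff_norm_le:
  assumes d: "is_qdiff f x0 T" and r: "r > 0"
    and sz: "\<forall>x\<in>ball x0 r. size (f x) = size (f x0)"
    and lip: "\<forall>x\<in>ball x0 r. Gdist (f x) (f x0) \<le> K * dist x x0"
    and vL: "(v,L) \<in># T"
  shows "norm (L *v h) \<le> K * norm h"
proof -
  let ?T0 = "image_mset (\<lambda>(w,A). (w, 0::mat2)) T"
  have fx0: "image_mset fst T = f x0" using d unfolding is_qdiff_iff by auto
  have "norm (L *v h - 0 *v h) \<le> K * norm h"
  proof (rule jet_diff_le[of T ?T0 v])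
    show "image_mset fst T = image_mset fst ?T0" by (simp add: multiset.map_comp comp_def case_prod_beta)
    show "(v, L) \<in># T" by (fact vL)
    show "(v, 0) \<in># ?T0" using vL by force
    show "consistent_jet ?T0" by (auto simp: consistent_jet_def)
    fix e :: real assume "0 < e"
    obtain r' where r': "r' > 0" "\<forall>t. 0 < t \<and> t < r' \<longrightarrow> Gdist (f (x0 + t *\<^sub>R h)) (qaff T (t *\<^sub>R h)) \<le> e * t"
      using is_qdiff_along[OF d \<open>0 < e\<close>] by blast
    show "\<exists>r>0. \<forall>t. 0 < t \<and> t < r \<longrightarrow> Gdist (qaff T (t *\<^sub>R h)) (qaff ?T0 (t *\<^sub>R h)) \<le> (K * norm h + e) * t"
    proof (intro exI[of _ "min r' (r / (norm h + 1))"] conjI allI impI)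
      show "0 < min r' (r / (norm h + 1))"
        using r r' norm_ge_zero[of h] by (simp add: add_nonneg_pos)
      fix t assume t: "0 < t \<and> t < min r' (r / (norm h + 1))"
      let ?x = "x0 + t *\<^sub>R h"
      have x: "?x \<in> ball x0 r" using t by (intro scaled_point_in_ball) auto
      then have size_x: "size (f ?x) = size T" using sz fx0 by (metis size_image_mset)
      have "Gdist (qaff T (t *\<^sub>R h)) (qaff ?T0 (t *\<^sub>R h)) = Gdist (qaff T (t *\<^sub>R h)) (f x0)"
        using qaff_zero_jet[of T] fx0 by simp
      also have "\<dots> \<le> Gdist (qaff T (t *\<^sub>R h)) (f ?x) + Gdist (f ?x) (f x0)"
        by (rule Gdist_triangle) (use size_x sz x in auto)
      also have "Gdist (qaff T (t *\<^sub>R h)) (f ?x) = Gdist (f ?x) (qaff T (t *\<^sub>R h))"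
        by (rule Gdist_sym) (simp add: size_x)
      also have "\<dots> \<le> e * t" using r'(2) t by simp
      also have "Gdist (f ?x) (f x0) \<le> K * (t * norm h)"
        using lip[rule_format, OF x] t by (simp add: dist_norm)
      finally show "Gdist (qaff T (t *\<^sub>R h)) (qaff ?T0 (t *\<^sub>R h)) \<le> (K * norm h + e) * t"
        by (simp add: algebra_simps)
    qed
  qed
  then show ?thesis by simp
qed

lemma abs_matrix_entry_le:
  assumes "\<forall>h. norm (L *v h) \<le> K * norm h"
  shows "\<bar>L $ i $ j\<bar> \<le> K"
proof -
  have "\<bar>L $ i $ j\<bar> = \<bar>(L *v axis j 1) $ i\<bar>" by (simp add: matrix_vector_mult_basis column_def)
  also have "\<dots> \<le> norm (L *v axis j 1)" by (rule component_le_norm_cart)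
  also have "\<dots> \<le> K" using assms[rule_format, of "axis j 1"] by simp
  finally show ?thesis .
qed

lemma consistent_jet_eq:
  assumes "consistent_jet T"
  shows "T = image_mset (\<lambda>w. (w, SOME L. (w,L) \<in># T)) (image_mset fst T)"
proof -
  have "image_mset (\<lambda>w. (w, SOME L. (w,L) \<in># T)) (image_mset fst T) = image_mset (\<lambda>u. (fst u, SOME L. (fst u,L) \<in># T)) T"
    by (simp add: multiset.map_comp comp_def)
  also have "\<dots> = image_mset id T"
  proof (rule image_mset_cong)
    fix u assume u: "u \<in># T"
    have ex: "\<exists>L. (fst u, L) \<in># T" using u by (metis prod.collapse)
    have "(fst u, SOME L. (fst u,L) \<in># T) \<in># T" using someI_ex[OF ex] .
    then have "(SOME L. (fst u,L) \<in># T) = snd u" using assms u unfolding consistent_jet_def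
      by (metis fst_conv snd_conv)
    then show "(fst u, SOME L. (fst u,L) \<in># T) = id u" by simp
  qed
  finally show ?thesis by simp
qed

lemma consistent_jet_eqI:
  assumes "image_mset fst T1 = image_mset fst T2" "consistent_jet T1" "consistent_jet T2"
    and same: "\<And>v L1 L2. (v, L1) \<in># T1 \<Longrightarrow> (v, L2) \<in># T2 \<Longrightarrow> L1 = L2"
  shows "T1 = T2"
proof -
  have "image_mset (\<lambda>w. (w, SOME L. (w,L) \<in># T1)) (image_mset fst T1)
      = image_mset (\<lambda>w. (w, SOME L. (w,L) \<in># T2)) (image_mset fst T1)"
  proof (rule image_mset_cong)
    fix w assume "w \<in># image_mset fst T1"
    then have e1: "\<exists>L. (w,L) \<in># T1" and e2: "\<exists>L. (w,L) \<in># T2" using assms(1)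
      by (metis (no_types, lifting) imageE prod.collapse set_image_mset)+
    show "(w, SOME L. (w,L) \<in># T1) = (w, SOME L. (w,L) \<in># T2)"
      using same[OF someI_ex[OF e1] someI_ex[OF e2]] by simp
  qed
  then have "T1 = image_mset (\<lambda>w. (w, SOME L. (w,L) \<in># T2)) (image_mset fst T1)"
    using consistent_jet_eq[OF assms(2)] by (rule trans[rotated])
  also have "\<dots> = image_mset (\<lambda>w. (w, SOME L. (w,L) \<in># T2)) (image_mset fst T2)"
    by (simp only: assms(1))
  also have "\<dots> = T2"
    by (rule consistent_jet_eq[OF assms(3), symmetric])
  finally show ?thesis .
qed

lemma is_qdiff_unique:
  assumes d1: "is_qdiff f x0 T1" and d2: "is_qdiff f x0 T2" and r: "r > 0"
    and sz: "\<forall>x\<in>ball x0 r. size (f x) = size (f x0)"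
  shows "T1 = T2"
proof (rule consistent_jet_eqI)
  show f12: "image_mset fst T1 = image_mset fst T2" and c: "consistent_jet T1" "consistent_jet T2"
    using d1 d2 unfolding is_qdiff_iff by auto
  fix v L1 L2 assume v: "(v, L1) \<in># T1" "(v, L2) \<in># T2"
  have "norm (L1 *v h - L2 *v h) \<le> 0" for h
  proof (rule jet_diff_le[OF f12 v c(2)])
    fix e :: real assume "0 < e"
    obtain r1 where r1: "r1 > 0" "\<forall>t. 0 < t \<and> t < r1 \<longrightarrow> Gdist (f (x0 + t *\<^sub>R h)) (qaff T1 (t *\<^sub>R h)) \<le> e / 2 * t"
      using is_qdiff_along[OF d1, of "e / 2"] \<open>0 < e\<close> by auto
    obtain r2 where r2: "r2 > 0" "\<forall>t. 0 < t \<and> t < r2 \<longrightarrow> Gdist (f (x0 + t *\<^sub>R h)) (qaff T2 (t *\<^sub>R h)) \<le> e / 2 * t"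
      using is_qdiff_along[OF d2, of "e / 2"] \<open>0 < e\<close> by auto
    show "\<exists>r>0. \<forall>t. 0 < t \<and> t < r \<longrightarrow> Gdist (qaff T1 (t *\<^sub>R h)) (qaff T2 (t *\<^sub>R h)) \<le> (0 + e) * t"
    proof (intro exI[of _ "min (min r1 r2) (r / (norm h + 1))"] conjI allI impI)
      show "0 < min (min r1 r2) (r / (norm h + 1))"
        using r r1 r2 norm_ge_zero[of h] by (simp add: add_nonneg_pos)
      fix t assume t: "0 < t \<and> t < min (min r1 r2) (r / (norm h + 1))"
      let ?x = "x0 + t *\<^sub>R h"
      have "?x \<in> ball x0 r" using t by (intro scaled_point_in_ball) auto
      then have size_x: "size (f ?x) = size T1" "size T2 = size T1"
        using sz d1 f12 unfolding is_qdiff_iff by (metis size_image_mset)+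
      have "Gdist (qaff T1 (t *\<^sub>R h)) (qaff T2 (t *\<^sub>R h))
          \<le> Gdist (qaff T1 (t *\<^sub>R h)) (f ?x) + Gdist (f ?x) (qaff T2 (t *\<^sub>R h))"
        by (rule Gdist_triangle) (use size_x in auto)
      also have "Gdist (qaff T1 (t *\<^sub>R h)) (f ?x) = Gdist (f ?x) (qaff T1 (t *\<^sub>R h))"
        by (rule Gdist_sym) (simp add: size_x)
      also have "\<dots> \<le> e / 2 * t" using r1(2) t by simp
      also have "Gdist (f ?x) (qaff T2 (t *\<^sub>R h)) \<le> e / 2 * t" using r2(2) t by simp
      finally show "Gdist (qaff T1 (t *\<^sub>R h)) (qaff T2 (t *\<^sub>R h)) \<le> (0 + e) * t"
        by simp
    qed
  qed
  then show "L1 = L2" by (simp add: matrix_eq)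
qed

lemma is_qdiff_local:
  assumes d: "is_qdiff f x0 T" and r: "r > 0" and eq: "\<forall>x\<in>ball x0 r. g x = f x"
  shows "is_qdiff g x0 T"
proof -
  have g0: "g x0 = f x0" using eq r by auto
  have ev: "eventually (\<lambda>x. Gdist (f x) (qaff T (x - x0)) / norm (x - x0) = Gdist (g x) (qaff T (x - x0)) / norm (x - x0)) (at x0)"
    unfolding eventually_at using r eq by (intro exI[of _ r]) (auto simp: dist_commute)
  show ?thesis using d g0 tendsto_cong[OF ev] unfolding is_qdiff_iff by simp
qed

lemma is_qdiff_rescale:
  assumes d: "is_qdiff g x0 T" and c: "c > 0" and r: "r > 0"
    and sz: "\<forall>x\<in>ball x0 r. size (g x) = size (g x0)"
  shows "is_qdiff (\<lambda>z. image_mset (scaleR (1/c)) (g (c *\<^sub>R z))) (x0 /\<^sub>R c) (image_mset (\<lambda>(v,L). (v /\<^sub>R c, L)) T)"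
proof -
  let ?T = "image_mset (\<lambda>(v,L). (v /\<^sub>R c, L)) T"
  let ?g = "\<lambda>z. image_mset (scaleR (1/c)) (g (c *\<^sub>R z))"
  have f0: "image_mset fst T = g x0" and c0: "consistent_jet T" using d unfolding is_qdiff_iff by auto
  have 1: "image_mset fst ?T = ?g (x0 /\<^sub>R c)"
    using f0[symmetric] c by (simp add: multiset.map_comp comp_def case_prod_beta inverse_eq_divide)
  have 2: "consistent_jet ?T" using c0 c unfolding consistent_jet_def by auto
  have 3: "((\<lambda>z. Gdist (?g z) (qaff ?T (z - x0 /\<^sub>R c)) / norm (z - x0 /\<^sub>R c)) \<longlongrightarrow> 0) (at (x0 /\<^sub>R c))"
    unfolding LIM_eq
  proof (intro allI impI)
    fix e :: real assume e: "e > 0"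
    obtain s where s: "s > 0" "\<forall>x. x \<noteq> x0 \<and> norm (x - x0) < s \<longrightarrow> Gdist (g x) (qaff T (x - x0)) < e * norm (x - x0)"
      using is_qdiffD[OF d e] by blast
    show "\<exists>s>0. \<forall>z. z \<noteq> x0 /\<^sub>R c \<and> norm (z - x0 /\<^sub>R c) < s \<longrightarrow>
        norm (Gdist (?g z) (qaff ?T (z - x0 /\<^sub>R c)) / norm (z - x0 /\<^sub>R c) - 0) < e"
    proof (intro exI[of _ "min s r / c"] conjI allI impI)
      show "min s r / c > 0" using s r c by simp
      fix z assume z: "z \<noteq> x0 /\<^sub>R c \<and> norm (z - x0 /\<^sub>R c) < min s r / c"
      define x where "x = c *\<^sub>R z"
      have xz: "x - x0 = c *\<^sub>R (z - x0 /\<^sub>R c)" using c by (simp add: x_def algebra_simps)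
      have nx: "norm (x - x0) = c * norm (z - x0 /\<^sub>R c)" using xz c by simp
      have nz: "norm (z - x0 /\<^sub>R c) > 0" using z by simp
      have xs: "norm (x - x0) < s" "norm (x - x0) < r" using nx z c by (auto simp: field_simps)
      have xne: "x \<noteq> x0" using nx nz c by auto
      have "norm (x0 - x) = norm (x - x0)" by (rule norm_minus_commute)
      then have xb: "x \<in> ball x0 r" using xs by (simp add: dist_norm)
      have szx: "size (g x) = size (qaff T (x - x0))" using sz xb f0 by (metis size_qaff size_image_mset)
      have affeq: "qaff ?T (z - x0 /\<^sub>R c) = image_mset (scaleR (1/c)) (qaff T (x - x0))"
        unfolding qaff_def xz using c
        by (simp add: multiset.map_comp comp_def case_prod_beta matrix_vector_mult_scaleR algebra_simps inverse_eq_divide)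
      have "Gdist (?g z) (qaff ?T (z - x0 /\<^sub>R c)) = Gdist (image_mset (scaleR (1/c)) (g x)) (image_mset (scaleR (1/c)) (qaff T (x - x0)))"
        using affeq x_def by simp
      also have "\<dots> \<le> (1/c) * Gdist (g x) (qaff T (x - x0))"
        by (rule Gdist_image_mset_le[OF szx]) (use c in \<open>auto simp: scaleR_diff_right[symmetric]\<close>)
      finally have le: "Gdist (?g z) (qaff ?T (z - x0 /\<^sub>R c)) \<le> (1/c) * Gdist (g x) (qaff T (x - x0))" .
      have ge: "0 \<le> Gdist (?g z) (qaff ?T (z - x0 /\<^sub>R c))"
        by (rule Gdist_nonneg) (use szx affeq x_def in simp)
      have "Gdist (g x) (qaff T (x - x0)) < e * norm (x - x0)" using s(2) xne xs by auto
      then have "(1/c) * Gdist (g x) (qaff T (x - x0)) < e * norm (z - x0 /\<^sub>R c)"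
        using nx c by (simp add: field_simps)
      then have "Gdist (?g z) (qaff ?T (z - x0 /\<^sub>R c)) < e * norm (z - x0 /\<^sub>R c)"
        using le by linarith
      then have "Gdist (?g z) (qaff ?T (z - x0 /\<^sub>R c)) / norm (z - x0 /\<^sub>R c) < e"
        using nz by (simp add: pos_divide_less_eq)
      then show "norm (Gdist (?g z) (qaff ?T (z - x0 /\<^sub>R c)) / norm (z - x0 /\<^sub>R c) - 0) < e"
        using ge nz by simp
    qed
  qed
  show ?thesis unfolding is_qdiff_iff using 1 2 3 by blast
qed

section \<open>Bounds on the integrand\<close>

lemma widx_eq: "widx = {(1,2),(1,3),(1,4),(2,3),(2,4),(3,4)}"
  unfolding widx_def by auto

lemma wnorm_LM: "wnorm (LM X) = sqrt (1 + (X$1$2)^2 + (X$2$2)^2 + (X$1$1)^2 + (X$2$1)^2 + (X$1$1*X$2$2 - X$2$1*X$1$2)^2)"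
  unfolding wnorm_def widx_eq LM_def wedge_def ev_def by (simp add: algebra_simps power2_eq_square)

lemma wnorm_LM_le:
  assumes "\<And>i j. \<bar>X $ i $ j\<bar> \<le> K"
  shows "wnorm (LM X) \<le> 1 + 2 * K^2"
proof -
  have K: "0 \<le> K" using assms[of 1 1] by linarith
  have sq: "(X$i$j)^2 \<le> K^2" for i j using power_mono[OF assms[of i j] abs_ge_zero, of 2] by simp
  have "\<bar>X$1$1*X$2$2 - X$2$1*X$1$2\<bar> \<le> \<bar>X$1$1\<bar>*\<bar>X$2$2\<bar> + \<bar>X$2$1\<bar>*\<bar>X$1$2\<bar>"
    by (simp add: abs_mult[symmetric] abs_triangle_ineq4)
  also have "\<dots> \<le> K*K + K*K" using assms K by (intro add_mono mult_mono) auto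
  finally have "\<bar>X$1$1*X$2$2 - X$2$1*X$1$2\<bar> \<le> 2*K^2" by (simp add: power2_eq_square)
  then have "(X$1$1*X$2$2 - X$2$1*X$1$2)^2 \<le> (2*K^2)^2"
    using power_mono[of "\<bar>X$1$1*X$2$2 - X$2$1*X$1$2\<bar>" "2*K^2" 2] by simp
  then have "1 + (X$1$2)^2 + (X$2$2)^2 + (X$1$1)^2 + (X$2$1)^2 + (X$1$1*X$2$2 - X$2$1*X$1$2)^2 \<le> (1 + 2*K^2)^2"
    using sq[of 1 2] sq[of 2 2] sq[of 1 1] sq[of 2 1] by (simp add: power2_eq_square algebra_simps)
  then show ?thesis unfolding wnorm_LM using K by (simp add: real_sqrt_le_iff')
qed

lemma psi_le_wnorm: "psi eps d X \<le> wnorm (LM X)"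
  unfolding psi_def wnorm_def by (auto intro: sum_nonneg)

lemma psibar_nonneg: "0 \<le> psibar eps d Y"
proof -
  have "\<forall>X\<in>#Y. 0 \<le> psi eps d X" unfolding psi_def wnorm_def by (auto intro: sum_nonneg)
  then show ?thesis unfolding psibar_def by (induct Y) auto
qed

lemma sum_mset_image_le:
  assumes "\<forall>x\<in>#M. g x \<le> (c::real)"
  shows "sum_mset (image_mset g M) \<le> real (size M) * c"
  using assms by (induct M) (auto simp: algebra_simps)

lemma psibar_qgrad_le_lipschitz:
  assumes U: "open U" "x0 \<in> U" and sz: "\<forall>x\<in>U. size (f x) = n"
    and lip: "\<forall>x\<in>U. \<forall>y\<in>U. Gdist (f x) (f y) \<le> K * dist x y" and K: "K \<ge> 0"
  shows "psibar eps d (qgrad f x0) \<le> real n * (1 + 2*K^2)"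
proof (cases "\<exists>T. is_qdiff f x0 T")
  case True
  define T where "T = (SOME T. is_qdiff f x0 T)"
  have dT: "is_qdiff f x0 T" using True someI_ex unfolding T_def by metis
  have qg: "qgrad f x0 = image_mset snd T" unfolding qgrad_def T_def using True by simp
  obtain r where r: "r > 0" "ball x0 r \<subseteq> U" using U open_contains_ball by blast
  have each: "psi eps d X \<le> 1 + 2*K^2" if "X \<in># image_mset snd T" for X
  proof -
    have "X \<in> snd ` set_mset T" using that by simp
    then obtain u where u: "u \<in># T" "X = snd u" by blast
    obtain v where vX: "(v,X) \<in># T" using u by (metis prod.collapse)
    have "norm (X *v h) \<le> K * norm h" for h
      by (rule is_qdiff_norm_le[OF dT r(1) _ _ vX]) (use r sz lip U in \<open>auto simp: subset_eq\<close>)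
    then have "\<bar>X $ i $ j\<bar> \<le> K" for i j by (intro abs_matrix_entry_le) auto
    then have "wnorm (LM X) \<le> 1 + 2*K^2" by (rule wnorm_LM_le)
    then show ?thesis using psi_le_wnorm[of eps d X] by linarith
  qed
  have "size T = n" using dT sz U unfolding is_qdiff_iff by (metis size_image_mset)
  then show ?thesis unfolding psibar_def qg using sum_mset_image_le[of "image_mset snd T" "psi eps d" "1 + 2*K^2"] each
    by simp
next
  case False
  then have "qgrad f x0 = {#}" unfolding qgrad_def by auto
  then show ?thesis unfolding psibar_def using K by simp
qed

lemma psibar_qgrad_rescale_le:
  assumes c: "0 < c" and U: "open U" "x0 \<in> U" and gU: "\<forall>x\<in>U. g x = image_mset (scaleR c) (f (x /\<^sub>R c))"
    and szg: "\<forall>x\<in>U. size (g x) = n" and V: "open V" "x0 /\<^sub>R c \<in> V" and szf: "\<forall>y\<in>V. size (f y) = n"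
  shows "psibar eps d (qgrad g x0) \<le> psibar eps d (qgrad f (x0 /\<^sub>R c))"
proof (cases "\<exists>T. is_qdiff g x0 T")
  case True
  define T where "T = (SOME T. is_qdiff g x0 T)"
  have dT: "is_qdiff g x0 T" using True someI_ex unfolding T_def by metis
  obtain r where r: "r > 0" "ball x0 r \<subseteq> U" using U open_contains_ball by blast
  have szb: "\<forall>x\<in>ball x0 r. size (g x) = size (g x0)" using szg r U by auto
  have d1: "is_qdiff (\<lambda>z. image_mset (scaleR (1/c)) (g (c *\<^sub>R z))) (x0 /\<^sub>R c) (image_mset (\<lambda>(v,L). (v /\<^sub>R c, L)) T)"
    by (rule is_qdiff_rescale[OF dT c r(1) szb])
  have eq: "\<forall>z\<in>ball (x0 /\<^sub>R c) (r / c). f z = image_mset (scaleR (1/c)) (g (c *\<^sub>R z))"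
  proof
    fix z assume z: "z \<in> ball (x0 /\<^sub>R c) (r / c)"
    have "c *\<^sub>R z - x0 = c *\<^sub>R (z - x0 /\<^sub>R c)" using c by (simp add: algebra_simps)
    moreover have "dist x0 (c *\<^sub>R z) = norm (c *\<^sub>R z - x0)" by (simp add: dist_norm norm_minus_commute)
    moreover have "dist (x0 /\<^sub>R c) z = norm (z - x0 /\<^sub>R c)" by (simp add: dist_norm norm_minus_commute)
    ultimately have "dist x0 (c *\<^sub>R z) = c * dist (x0 /\<^sub>R c) z" using c by simp
    then have "c *\<^sub>R z \<in> ball x0 r" using z c by (simp add: field_simps)
    then have "g (c *\<^sub>R z) = image_mset (scaleR c) (f z)" using gU r c by auto
    then show "f z = image_mset (scaleR (1/c)) (g (c *\<^sub>R z))" using c by (simp add: multiset.map_comp comp_def)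
  qed
  have d2: "is_qdiff f (x0 /\<^sub>R c) (image_mset (\<lambda>(v,L). (v /\<^sub>R c, L)) T)"
    by (rule is_qdiff_local[OF d1 _ eq]) (use r c in simp)
  obtain r2 where r2: "r2 > 0" "ball (x0 /\<^sub>R c) r2 \<subseteq> V" using V open_contains_ball by blast
  have szb2: "\<forall>y\<in>ball (x0 /\<^sub>R c) r2. size (f y) = size (f (x0 /\<^sub>R c))" using szf V r2 by auto
  have ex: "\<exists>T. is_qdiff f (x0 /\<^sub>R c) T" using d2 by blast
  have "(SOME T. is_qdiff f (x0 /\<^sub>R c) T) = image_mset (\<lambda>(v,L). (v /\<^sub>R c, L)) T"
    using is_qdiff_unique[OF someI_ex[OF ex] d2 r2(1) szb2] .
  then have "qgrad f (x0 /\<^sub>R c) = image_mset snd (image_mset (\<lambda>(v,L). (v /\<^sub>R c, L)) T)"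
    unfolding qgrad_def using ex by simp
  also have "\<dots> = image_mset snd T" by (simp add: multiset.map_comp comp_def case_prod_beta)
  also have "\<dots> = qgrad g x0" unfolding qgrad_def T_def using True by simp
  finally show ?thesis by simp
next
  case False
  then have "qgrad g x0 = {#}" unfolding qgrad_def by auto
  then show ?thesis using psibar_nonneg[of eps d] by (simp add: psibar_def)
qed

definition maxnorm :: "pt2 \<Rightarrow> real" where "maxnorm x = max \<bar>x$1\<bar> \<bar>x$2\<bar>"

lemma maxnorm_diff_le: "\<bar>maxnorm x - maxnorm y\<bar> \<le> norm (x - y)"
proof -
  have c1: "\<bar>\<bar>x$1\<bar> - \<bar>y$1\<bar>\<bar> \<le> norm (x - y)"
    using component_le_norm_cart[of "x - y" 1] abs_triangle_ineq3[of "x$1" "y$1"] by simp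
  have c2: "\<bar>\<bar>x$2\<bar> - \<bar>y$2\<bar>\<bar> \<le> norm (x - y)"
    using component_le_norm_cart[of "x - y" 2] abs_triangle_ineq3[of "x$2" "y$2"] by simp
  have ml: "\<bar>max a1 a2 - max b1 b2\<bar> \<le> N" if "\<bar>a1 - b1\<bar> \<le> N" "\<bar>a2 - b2\<bar> \<le> (N::real)" for a1 a2 b1 b2 N
    using that by (auto simp: max_def abs_le_iff)
  show ?thesis unfolding maxnorm_def by (rule ml[OF c1 c2])
qed

lemma continuous_on_maxnorm: "continuous_on S maxnorm"
  unfolding maxnorm_def by (intro continuous_intros)

lemma maxnorm_scaleR: "maxnorm (c *\<^sub>R x) = \<bar>c\<bar> * maxnorm x"
  unfolding maxnorm_def by (simp add: abs_mult max_mult_distrib_left)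

lemma norm_le_maxnorm: "norm x \<le> 2 * maxnorm x"
proof -
  have "norm x \<le> (\<Sum>i\<in>UNIV. \<bar>x$i\<bar>)" by (rule norm_le_l1_cart)
  also have "\<dots> = \<bar>x$1\<bar> + \<bar>x$2\<bar>" by (simp add: sum_2)
  also have "\<dots> \<le> 2 * maxnorm x" unfolding maxnorm_def by simp
  finally show ?thesis .
qed

lemma mem_box_maxnorm: "x \<in> box (\<chi> i. - a) (\<chi> i. a) \<longleftrightarrow> maxnorm x < a"
  unfolding mem_box_cart maxnorm_def forall_2 by auto

lemma mem_cbox_maxnorm: "x \<in> cbox (\<chi> i. - a) (\<chi> i. a) \<longleftrightarrow> maxnorm x \<le> a"
  unfolding mem_box_cart maxnorm_def forall_2 by auto

lemma box_eq_maxnorm: "box (\<chi> i. - a) (\<chi> i. a) = {x. maxnorm x < a}"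
  using mem_box_maxnorm by blast

lemma cbox_eq_maxnorm: "cbox (\<chi> i. - a) (\<chi> i. a) = {x. maxnorm x \<le> a}"
  using mem_cbox_maxnorm by blast

lemma Dsq_box: "Dsq = box (\<chi> i. - (1/2)) (\<chi> i. 1/2)"
  unfolding Dsq_def by simp

lemma Dsq_eq_maxnorm: "Dsq = {x. maxnorm x < 1/2}"
  unfolding Dsq_box using box_eq_maxnorm[of "1/2"] by simp

lemma closure_Dsq: "closure Dsq = {x. maxnorm x \<le> 1/2}"
proof -
  have "(0::pt2) \<in> Dsq" unfolding Dsq_eq_maxnorm maxnorm_def by simp
  then have "box (\<chi> i. - (1/2::real)) (\<chi> i. 1/2) \<noteq> ({}::pt2 set)" unfolding Dsq_box by auto
  then show ?thesis unfolding Dsq_box using closure_box cbox_eq_maxnorm[of "1/2"] by simp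
qed

lemma open_Dsq: "open Dsq" unfolding Dsq_def by (rule open_box)

lemma frontier_Dsq: "frontier Dsq = {x. maxnorm x = 1/2}"
proof -
  have "frontier Dsq = closure Dsq - Dsq" by (simp add: frontier_def interior_open[OF open_Dsq])
  also have "\<dots> = {x. maxnorm x = 1/2}" unfolding closure_Dsq by (auto simp: Dsq_eq_maxnorm)
  finally show ?thesis .
qed

lemma convex_closure_Dsq: "convex (closure Dsq)"
  unfolding Dsq_def by (intro convex_closure convex_box)

lemma norm_le_1_of_closure_Dsq: "x \<in> closure Dsq \<Longrightarrow> norm x \<le> 1"
  using norm_le_maxnorm[of x] unfolding closure_Dsq by simp

lemma emeasure_box_sym: "0 \<le> a \<Longrightarrow> emeasure lborel (box (\<chi> i. - a) (\<chi> i. a) :: pt2 set) = ennreal ((2*a)^2)"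
  by (simp add: emeasure_lborel_box_eq Basis_vec_def cart_eq_inner_axis[symmetric] prod.UNION_disjoint
      inner_axis axis_eq_axis power_mult_distrib)

lemma emeasure_cbox_sym: "0 \<le> a \<Longrightarrow> emeasure lborel (cbox (\<chi> i. - a) (\<chi> i. a) :: pt2 set) = ennreal ((2*a)^2)"
  by (simp add: emeasure_lborel_cbox_eq Basis_vec_def cart_eq_inner_axis[symmetric] prod.UNION_disjoint
      inner_axis axis_eq_axis power_mult_distrib)

lemma emeasure_Dsq: "emeasure lborel Dsq = 1"
  unfolding Dsq_box using emeasure_box_sym[of "1/2"] by simp

lemma emeasure_Dsq_Diff_cbox:
  assumes "0 \<le> a" "a < 1/2"
  shows "emeasure lborel (Dsq - cbox (\<chi> i. - a) (\<chi> i. a)) = ennreal (1 - (2 * a)^2)"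
proof -
  have "cbox (\<chi> i. - a) (\<chi> i. a) \<subseteq> Dsq"
    unfolding Dsq_eq_maxnorm using assms mem_cbox_maxnorm by auto
  then have "emeasure lborel (Dsq - cbox (\<chi> i. - a) (\<chi> i. a))
      = emeasure lborel Dsq - emeasure lborel (cbox (\<chi> i. - a) (\<chi> i. a) :: pt2 set)"
    by (intro emeasure_Diff) (auto simp: Dsq_def emeasure_cbox_sym[OF assms(1)])
  also have "\<dots> = ennreal (1 - (2 * a)^2)"
    using assms emeasure_Dsq emeasure_cbox_sym[OF assms(1)] ennreal_minus[of "(2 * a)^2" 1] by simp
  finally show ?thesis .
qed

lemma nn_integral_rescale_le:
  fixes G :: "pt2 \<Rightarrow> ennreal" assumes c: "0 < c"
  shows "(\<integral>\<^sup>+x. G (x /\<^sub>R c) \<partial>lborel) \<le> ennreal (c^2) * (\<integral>\<^sup>+y. G y \<partial>lborel)"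
proof -
  have "(\<integral>\<^sup>+x. G (x /\<^sub>R c) \<partial>lborel) = (SUP g \<in> {g. simple_function lborel g \<and> g \<le> (\<lambda>x. G (x /\<^sub>R c))}. integral\<^sup>S lborel g)"
    by (simp add: nn_integral_def)
  also have "\<dots> \<le> ennreal (c^2) * (\<integral>\<^sup>+y. G y \<partial>lborel)"
  proof (rule SUP_least)
    fix g assume g: "g \<in> {g. simple_function lborel g \<and> g \<le> (\<lambda>x. G (x /\<^sub>R c))}"
    then have sf: "simple_function lborel g" and le: "\<And>x. g x \<le> G (x /\<^sub>R c)" by (auto simp: le_fun_def)
    have gm: "g \<in> borel_measurable lborel" by (rule borel_measurable_simple_function[OF sf])
    then have gm': "g \<in> borel_measurable borel" by simp
    have meas: "(\<lambda>x. 0 + c *\<^sub>R x) \<in> lborel \<rightarrow>\<^sub>M (borel :: pt2 measure)" by simp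
    have "integral\<^sup>S lborel g = (\<integral>\<^sup>+x. g x \<partial>lborel)" by (simp add: nn_integral_eq_simple_integral[OF sf])
    also have "\<dots> = (\<integral>\<^sup>+x. g x \<partial>(density (distr lborel borel (\<lambda>x. 0 + c *\<^sub>R x)) (\<lambda>_. ennreal (\<bar>c\<bar>^DIM(pt2)))))"
      using lborel_affine[of c "0::pt2"] c by simp
    also have "\<dots> = (\<integral>\<^sup>+x. ennreal (\<bar>c\<bar>^DIM(pt2)) * g x \<partial>(distr lborel borel (\<lambda>x. 0 + c *\<^sub>R x)))"
      by (rule nn_integral_density) (use gm' in auto)
    also have "\<dots> = (\<integral>\<^sup>+x. ennreal (\<bar>c\<bar>^DIM(pt2)) * g (0 + c *\<^sub>R x) \<partial>lborel)"
      by (rule nn_integral_distr[OF meas]) (use gm' in auto)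
    also have "\<dots> = ennreal (c^2) * (\<integral>\<^sup>+x. g (c *\<^sub>R x) \<partial>lborel)"
      using c gm' by (simp add: nn_integral_cmult)
    also have "\<dots> \<le> ennreal (c^2) * (\<integral>\<^sup>+y. G y \<partial>lborel)"
      using le[of "c *\<^sub>R _"] c by (intro mult_left_mono nn_integral_mono) auto
    finally show "integral\<^sup>S lborel g \<le> ennreal (c^2) * (\<integral>\<^sup>+y. G y \<partial>lborel)" .
  qed
  finally show ?thesis .
qed

lemma ennreal_le_minus_add: "(a::ennreal) \<le> (a - b) + b"
proof (cases "b \<le> a")
  case True then show ?thesis by (simp add: diff_add_cancel_ennreal)
next
  case False then show ?thesis by (simp add: add_increasing)
qed

lemma nn_integral_add_le:
  assumes v: "v \<in> borel_measurable M"
  shows "(\<integral>\<^sup>+x. u x + v x \<partial>M) \<le> (\<integral>\<^sup>+x. u x \<partial>M) + (\<integral>\<^sup>+x. v x \<partial>M)"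
proof -
  have "(\<integral>\<^sup>+x. u x + v x \<partial>M) = (SUP g \<in> {g. simple_function M g \<and> g \<le> (\<lambda>x. u x + v x) \<and> (\<forall>x. g x < top)}. integral\<^sup>S M g)"
    by (rule nn_integral_def_finite)
  also have "\<dots> \<le> (\<integral>\<^sup>+x. u x \<partial>M) + (\<integral>\<^sup>+x. v x \<partial>M)"
  proof (rule SUP_least)
    fix g assume g: "g \<in> {g. simple_function M g \<and> g \<le> (\<lambda>x. u x + v x) \<and> (\<forall>x. g x < top)}"
    then have sf: "simple_function M g" and le: "\<And>x. g x \<le> u x + v x" and fin: "\<And>x. g x < top"
      by (auto simp: le_fun_def)
    have gm: "g \<in> borel_measurable M" by (rule borel_measurable_simple_function[OF sf])
    have "integral\<^sup>S M g = (\<integral>\<^sup>+x. g x \<partial>M)" by (simp add: nn_integral_eq_simple_integral[OF sf])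
    also have "\<dots> \<le> (\<integral>\<^sup>+x. (g x - v x) + v x \<partial>M)"
      by (intro nn_integral_mono) (rule ennreal_le_minus_add)
    also have "\<dots> = (\<integral>\<^sup>+x. g x - v x \<partial>M) + (\<integral>\<^sup>+x. v x \<partial>M)"
      by (rule nn_integral_add) (use gm v in auto)
    also have "(\<integral>\<^sup>+x. g x - v x \<partial>M) \<le> (\<integral>\<^sup>+x. u x \<partial>M)"
    proof (intro nn_integral_mono)
      fix x
      show "g x - v x \<le> u x" using le[of x] fin[of x] by (auto simp: ennreal_minus_le_iff add.commute)
    qed
    finally show "integral\<^sup>S M g \<le> (\<integral>\<^sup>+x. u x \<partial>M) + (\<integral>\<^sup>+x. v x \<partial>M)" by (simp add: add_right_mono)
  qed
  finally show ?thesis .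
qed

section \<open>Shrinking a competitor and interpolating the boundary data\<close>

text \<open>
  Given a competitor \<open>\<phi> = \<Sum>\<^sub>z \<Phi> z\<close> for \<open>q\<close>, the competitor for \<open>image_mset \<pi> q\<close> is
  \<open>\<lambda>\<phi>(x/\<lambda>)\<close> on the square \<open>2 maxnorm x \<le> \<lambda>\<close>; on the annulus outside it, the sheet of
  \<open>z = (a, X)\<close> runs from \<open>\<lambda>(a + X(x/\<lambda>)) = \<lambda>a + X x\<close> to the boundary datum
  \<open>fst (\<pi> z) + snd (\<pi> z) x\<close>, linearly in \<open>maxnorm x\<close>. The sheets are then regrouped
  according to their image under \<open>\<pi>\<close>.
\<close>

locale shrink_and_interpolate =
  fixes q :: "qpt multiset" and \<pi> :: "qpt \<Rightarrow> qpt" and lam \<rho> R :: real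
    and \<phi> :: "pt2 \<Rightarrow> pt2 multiset" and \<Phi> :: "qpt \<Rightarrow> pt2 \<Rightarrow> pt2 multiset"
  assumes \<Phi>_qlip: "\<forall>z\<in>#q. qlip (count q z) (closure Dsq) (\<Phi> z)"
    and \<Phi>_frontier: "\<forall>z\<in>#q. \<forall>x\<in>frontier Dsq. \<Phi> z x = replicate_mset (count q z) (fst z + snd z *v x)"
    and \<phi>_eq_sum: "\<forall>x\<in>closure Dsq. \<phi> x = (\<Sum>z\<in>set_mset q. \<Phi> z x)"
    and displacement: "\<forall>z\<in>#q. norm (z - \<pi> z) \<le> \<rho>"
    and norm_le_R: "\<forall>z\<in>#q. norm z \<le> R"
    and lam: "0 < lam" "lam < 1"
    and nonneg: "0 \<le> \<rho>" "0 \<le> R"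
begin

definition target where "target = image_mset \<pi> q"

definition ramp where "ramp x = (2 * maxnorm x - lam) / (1 - lam)"

definition interp where
  "interp z x = lam *\<^sub>R fst z + snd z *v x
     + ramp x *\<^sub>R ((fst (\<pi> z) - lam *\<^sub>R fst z) + (snd (\<pi> z) - snd z) *v x)"

definition sheet where
  "sheet z x = (if 2 * maxnorm x \<le> lam then image_mset (scaleR lam) (\<Phi> z (x /\<^sub>R lam))
     else replicate_mset (count q z) (interp z x))"

definition target_sheet where "target_sheet y x = (\<Sum>z\<in>{z\<in>set_mset q. \<pi> z = y}. sheet z x)"

definition competitor where "competitor x = (\<Sum>y\<in>set_mset target. target_sheet y x)"

definition interp_lip where "interp_lip = 3 * R + \<rho> + 4 * \<rho> / (1 - lam)"

definition outer_cost where "outer_cost = real (size q) * (1 + 2 * (real (size q) * interp_lip)^2)"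

lemma competitor_eq_sum_sheets: "competitor x = (\<Sum>z\<in>set_mset q. sheet z x)"
  unfolding competitor_def target_sheet_def by (rule sum.group) (auto simp: target_def)

lemma count_target: "count target y = (\<Sum>z\<in>{z\<in>set_mset q. \<pi> z = y}. count q z)"
proof -
  have "{z\<in>set_mset q. \<pi> z = y} = \<pi> -` {y} \<inter> set_mset q" by auto
  then show ?thesis unfolding target_def count_image_mset by simp
qed

lemma scaled_in_closure_Dsq: "2 * maxnorm x \<le> lam \<Longrightarrow> x /\<^sub>R lam \<in> closure Dsq"
  using lam unfolding closure_Dsq by (simp add: maxnorm_scaleR field_simps)

lemma size_phi:
  assumes "x \<in> closure Dsq"
  shows "size (\<phi> x) = size q"
proof -
  have "size (\<phi> x) = (\<Sum>z\<in>set_mset q. size (\<Phi> z x))"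
    using \<phi>_eq_sum assms by simp
  also have "\<dots> = (\<Sum>z\<in>set_mset q. count q z)"
    using \<Phi>_qlip assms unfolding qlip_def by (intro sum.cong) auto
  finally show ?thesis by (simp add: size_multiset_overloaded_eq[of q])
qed

lemma size_sheet: "z \<in># q \<Longrightarrow> x \<in> closure Dsq \<Longrightarrow> size (sheet z x) = count q z"
  using \<Phi>_qlip scaled_in_closure_Dsq unfolding sheet_def qlip_def by auto

lemma size_target_sheet: "x \<in> closure Dsq \<Longrightarrow> size (target_sheet y x) = count target y"
  unfolding target_sheet_def count_target by (auto simp: size_sheet)

lemma size_competitor:
  assumes "x \<in> closure Dsq"
  shows "size (competitor x) = size q"
proof -
  have "size (competitor x) = (\<Sum>z\<in>set_mset q. count q z)"
    unfolding competitor_eq_sum_sheets using assms by (auto simp: size_sheet)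
  then show ?thesis by (simp add: size_multiset_overloaded_eq[of q])
qed

lemma sheet_outer:
  assumes z: "z \<in># q" and x: "x \<in> closure Dsq" and l: "lam \<le> 2 * maxnorm x"
  shows "sheet z x = replicate_mset (count q z) (interp z x)"
proof (cases "2 * maxnorm x = lam")
  case True
  have fr: "x /\<^sub>R lam \<in> frontier Dsq"
    using True lam unfolding frontier_Dsq by (simp add: maxnorm_scaleR field_simps)
  have "ramp x = 0" using True unfolding ramp_def by simp
  then have "lam *\<^sub>R (fst z + snd z *v (x /\<^sub>R lam)) = interp z x"
    using lam unfolding interp_def by (simp add: matrix_vector_mult_scaleR scaleR_add_right)
  then show ?thesis
    using True \<Phi>_frontier z fr unfolding sheet_def by simp
next
  case False
  then show ?thesis using l unfolding sheet_def by auto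
qed

lemma interp_frontier: "x \<in> frontier Dsq \<Longrightarrow> interp z x = fst (\<pi> z) + snd (\<pi> z) *v x"
  using lam unfolding interp_def ramp_def frontier_Dsq by (simp add: algebra_simps)

lemma ramp_bounds: "x \<in> closure Dsq \<Longrightarrow> lam \<le> 2 * maxnorm x \<Longrightarrow> 0 \<le> ramp x \<and> ramp x \<le> 1"
  using lam unfolding ramp_def closure_Dsq by (auto simp: field_simps)

lemma abs_ramp_diff_le: "\<bar>ramp x - ramp x'\<bar> \<le> 2 * norm (x - x') / (1 - lam)"
proof -
  have "ramp x - ramp x' = 2 * (maxnorm x - maxnorm x') / (1 - lam)"
    unfolding ramp_def by (simp add: diff_divide_distrib[symmetric] right_diff_distrib)
  then have "\<bar>ramp x - ramp x'\<bar> = \<bar>2 * (maxnorm x - maxnorm x')\<bar> / \<bar>1 - lam\<bar>"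
    by (simp only: abs_divide)
  also have "\<dots> = 2 * \<bar>maxnorm x - maxnorm x'\<bar> / (1 - lam)"
  proof -
    have "\<bar>2 * (maxnorm x - maxnorm x')\<bar> = 2 * \<bar>maxnorm x - maxnorm x'\<bar>"
      by (simp only: abs_mult)
    then show ?thesis using lam by (simp add: abs_of_pos)
  qed
  also have "\<dots> \<le> 2 * norm (x - x') / (1 - lam)"
    using maxnorm_diff_le[of x x'] lam by (simp add: divide_right_mono)
  finally show ?thesis .
qed

lemma sheet_data_bounds:
  assumes "z \<in># q"
  shows "norm (fst z) \<le> R" "norm (snd z) \<le> R"
    and "norm (fst (\<pi> z) - fst z) \<le> \<rho>" "norm (snd (\<pi> z) - snd z) \<le> \<rho>"
proof -
  obtain a X where aX: "z = (a, X)" by (cases z)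
  obtain b Y where bY: "\<pi> z = (b, Y)" by (cases "\<pi> z")
  have "norm (a, X) \<le> R" and "norm (a - b, X - Y) \<le> \<rho>"
    using norm_le_R displacement assms aX bY by auto
  then have "norm a \<le> R" "norm X \<le> R" "norm (b - a) \<le> \<rho>" "norm (Y - X) \<le> \<rho>"
    by (auto simp: norm_minus_commute intro: order_trans[OF norm_fst_le] order_trans[OF norm_snd_le])
  then show "norm (fst z) \<le> R" "norm (snd z) \<le> R"
    and "norm (fst (\<pi> z) - fst z) \<le> \<rho>" "norm (snd (\<pi> z) - snd z) \<le> \<rho>"
    using aX bY by auto
qed

lemma norm_interp_offset_le:
  assumes z: "z \<in># q" and x: "x \<in> closure Dsq"
  shows "norm ((fst (\<pi> z) - lam *\<^sub>R fst z) + (snd (\<pi> z) - snd z) *v x) \<le> 2 * \<rho> + (1 - lam) * R"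
proof -
  have "fst (\<pi> z) - lam *\<^sub>R fst z = (fst (\<pi> z) - fst z) + (1 - lam) *\<^sub>R fst z"
    by (simp add: algebra_simps)
  then have "norm (fst (\<pi> z) - lam *\<^sub>R fst z) \<le> norm (fst (\<pi> z) - fst z) + (1 - lam) * norm (fst z)"
    using lam by (metis abs_of_pos diff_gt_0_iff_gt norm_scaleR norm_triangle_ineq)
  also have "\<dots> \<le> \<rho> + (1 - lam) * R"
    using sheet_data_bounds[OF z] lam by (intro add_mono mult_left_mono) auto
  finally have "norm (fst (\<pi> z) - lam *\<^sub>R fst z) \<le> \<rho> + (1 - lam) * R" .
  moreover have "norm ((snd (\<pi> z) - snd z) *v x) \<le> \<rho> * 1"
    using norm_matrix_vector_mult_le[of "snd (\<pi> z) - snd z" x] sheet_data_bounds(4)[OF z]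
      norm_le_1_of_closure_Dsq[OF x] nonneg
    by (meson mult_mono norm_ge_zero order_trans)
  ultimately show ?thesis
    using norm_triangle_ineq[of "fst (\<pi> z) - lam *\<^sub>R fst z" "(snd (\<pi> z) - snd z) *v x"] by linarith
qed

lemma interp_lipschitz:
  assumes z: "z \<in># q" and x: "x \<in> closure Dsq" and x': "x' \<in> closure Dsq"
    and l: "lam \<le> 2 * maxnorm x" "lam \<le> 2 * maxnorm x'"
  shows "norm (interp z x - interp z x') \<le> interp_lip * norm (x - x')"
proof -
  define u where "u = norm (x - x')"
  define c where "c = (fst (\<pi> z) - lam *\<^sub>R fst z) + (snd (\<pi> z) - snd z) *v x"
  define D where "D = snd (\<pi> z) - snd z"
  have eq: "interp z x - interp z x' = snd z *v (x - x') + (ramp x - ramp x') *\<^sub>R c + ramp x' *\<^sub>R (D *v (x - x'))"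
    unfolding interp_def c_def D_def
    by (simp add: algebra_simps matrix_vector_right_distrib matrix_vector_mult_diff_distrib)
  have t1: "norm (snd z *v (x - x')) \<le> R * u"
    using norm_matrix_vector_mult_le[of "snd z" "x - x'"] sheet_data_bounds(2)[OF z] unfolding u_def
    by (meson mult_right_mono norm_ge_zero order_trans)
  have "\<bar>ramp x - ramp x'\<bar> * norm c \<le> (2 * u / (1 - lam)) * (2 * \<rho> + (1 - lam) * R)"
    using abs_ramp_diff_le[of x x'] norm_interp_offset_le[OF z x] unfolding u_def c_def
    by (intro mult_mono) auto
  then have t2: "norm ((ramp x - ramp x') *\<^sub>R c) \<le> (2 * u / (1 - lam)) * (2 * \<rho> + (1 - lam) * R)"
    by simp
  have "norm (D *v (x - x')) \<le> \<rho> * u"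
    using norm_matrix_vector_mult_le[of D "x - x'"] sheet_data_bounds(4)[OF z] unfolding u_def D_def
    by (meson mult_right_mono norm_ge_zero order_trans)
  then have "\<bar>ramp x'\<bar> * norm (D *v (x - x')) \<le> 1 * (\<rho> * u)"
    using ramp_bounds[OF x' l(2)] by (intro mult_mono) auto
  then have t3: "norm (ramp x' *\<^sub>R (D *v (x - x'))) \<le> \<rho> * u"
    by simp
  have "norm (interp z x - interp z x') \<le> R * u + (2 * u / (1 - lam)) * (2 * \<rho> + (1 - lam) * R) + \<rho> * u"
    unfolding eq using t1 t2 t3 norm_triangle_ineq[of "snd z *v (x - x') + (ramp x - ramp x') *\<^sub>R c" "ramp x' *\<^sub>R (D *v (x - x'))"]
      norm_triangle_ineq[of "snd z *v (x - x')" "(ramp x - ramp x') *\<^sub>R c"]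
    by linarith
  also have "\<dots> = interp_lip * u"
    unfolding interp_lip_def using lam by (simp add: field_simps)
  finally show ?thesis unfolding u_def .
qed

lemma interp_lip_nonneg: "0 \<le> interp_lip"
  unfolding interp_lip_def using lam nonneg by simp

lemma sheet_outer_lipschitz:
  assumes z: "z \<in># q" and x: "x \<in> closure Dsq" and x': "x' \<in> closure Dsq"
    and l: "lam \<le> 2 * maxnorm x" "lam \<le> 2 * maxnorm x'"
  shows "Gdist (sheet z x) (sheet z x') \<le> real (count q z) * interp_lip * dist x x'"
proof -
  have "Gdist (sheet z x) (sheet z x') \<le> real (count q z) * norm (interp z x - interp z x')"
    using sheet_outer[OF z x l(1)] sheet_outer[OF z x' l(2)] Gdist_replicate_le by simp
  also have "\<dots> \<le> real (count q z) * (interp_lip * norm (x - x'))"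
    using interp_lipschitz[OF z x x' l] by (intro mult_left_mono) auto
  finally show ?thesis by (simp add: dist_norm mult.assoc)
qed

lemma sheet_inner_lipschitz:
  assumes z: "z \<in># q"
  obtains L where "0 \<le> L"
    and "\<And>x x'. x \<in> closure Dsq \<Longrightarrow> x' \<in> closure Dsq \<Longrightarrow> 2 * maxnorm x \<le> lam \<Longrightarrow> 2 * maxnorm x' \<le> lam
          \<Longrightarrow> Gdist (sheet z x) (sheet z x') \<le> L * dist x x'"
proof -
  obtain L where L: "L \<ge> 0" "\<forall>x\<in>closure Dsq. \<forall>y\<in>closure Dsq. Gdist (\<Phi> z x) (\<Phi> z y) \<le> L * dist x y"
    using qlip_nonneg_constant \<Phi>_qlip z by blast
  have size_\<Phi>: "\<forall>x\<in>closure Dsq. size (\<Phi> z x) = count q z"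
    using \<Phi>_qlip z unfolding qlip_def by auto
  show ?thesis
  proof (rule that[OF L(1)])
    fix x x' assume x: "x \<in> closure Dsq" "x' \<in> closure Dsq" and l: "2 * maxnorm x \<le> lam" "2 * maxnorm x' \<le> lam"
    have c: "x /\<^sub>R lam \<in> closure Dsq" "x' /\<^sub>R lam \<in> closure Dsq"
      using scaled_in_closure_Dsq l by auto
    have "Gdist (sheet z x) (sheet z x')
        = Gdist (image_mset (scaleR lam) (\<Phi> z (x /\<^sub>R lam))) (image_mset (scaleR lam) (\<Phi> z (x' /\<^sub>R lam)))"
      using l unfolding sheet_def by simp
    also have "\<dots> \<le> lam * Gdist (\<Phi> z (x /\<^sub>R lam)) (\<Phi> z (x' /\<^sub>R lam))"
      by (rule Gdist_image_mset_le) (use size_\<Phi> c lam in \<open>auto simp: scaleR_diff_right[symmetric]\<close>)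
    also have "\<dots> \<le> lam * (L * dist (x /\<^sub>R lam) (x' /\<^sub>R lam))"
      using L c lam by (intro mult_left_mono) auto
    also have "dist (x /\<^sub>R lam) (x' /\<^sub>R lam) = dist x x' / lam"
    proof -
      have "x /\<^sub>R lam - x' /\<^sub>R lam = (1 / lam) *\<^sub>R (x - x')"
        by (simp add: algebra_simps inverse_eq_divide)
      then show ?thesis using lam by (simp add: dist_norm)
    qed
    finally show "Gdist (sheet z x) (sheet z x') \<le> L * dist x x'"
      using lam by simp
  qed
qed

lemma sheet_lipschitz:
  assumes z: "z \<in># q"
  shows "\<exists>K. \<forall>x\<in>closure Dsq. \<forall>x'\<in>closure Dsq. Gdist (sheet z x) (sheet z x') \<le> K * dist x x'"
proof -
  obtain L where L: "0 \<le> L"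
    "\<And>x x'. x \<in> closure Dsq \<Longrightarrow> x' \<in> closure Dsq \<Longrightarrow> 2 * maxnorm x \<le> lam \<Longrightarrow> 2 * maxnorm x' \<le> lam
       \<Longrightarrow> Gdist (sheet z x) (sheet z x') \<le> L * dist x x'"
    using sheet_inner_lipschitz[OF z] by blast
  define K where "K = max L (real (count q z) * interp_lip)"
  have inner: "Gdist (sheet z x) (sheet z x') \<le> K * dist x x'"
    if "x \<in> closure Dsq" "x' \<in> closure Dsq" "2 * maxnorm x \<le> lam" "2 * maxnorm x' \<le> lam" for x x'
    using L(2)[OF that] mult_right_mono[of L K "dist x x'"] unfolding K_def by simp
  have outer: "Gdist (sheet z x) (sheet z x') \<le> K * dist x x'"
    if "x \<in> closure Dsq" "x' \<in> closure Dsq" "lam \<le> 2 * maxnorm x" "lam \<le> 2 * maxnorm x'" for x x'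
    using sheet_outer_lipschitz[OF z that] mult_right_mono[of "real (count q z) * interp_lip" K "dist x x'"]
    unfolding K_def by simp
  have "continuous_on (closure Dsq) (\<lambda>x. 2 * maxnorm x)"
    by (intro continuous_intros continuous_on_maxnorm)
  then have "\<forall>x\<in>closure Dsq. \<forall>x'\<in>closure Dsq. Gdist (sheet z x) (sheet z x') \<le> K * dist x x'"
    using inner outer size_sheet[OF z]
    by (intro Gdist_lipschitz_glue[OF convex_closure_Dsq, where c = lam]) auto
  then show ?thesis by blast
qed

lemma target_sheet_lipschitz:
  "\<exists>K. \<forall>x\<in>closure Dsq. \<forall>x'\<in>closure Dsq. Gdist (target_sheet y x) (target_sheet y x') \<le> K * dist x x'"
proof -
  obtain L where L: "\<forall>z\<in>#q. \<forall>x\<in>closure Dsq. \<forall>x'\<in>closure Dsq. Gdist (sheet z x) (sheet z x') \<le> L z * dist x x'"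
    using sheet_lipschitz by metis
  have "Gdist (target_sheet y x) (target_sheet y x') \<le> (\<Sum>z\<in>{z\<in>set_mset q. \<pi> z = y}. L z) * dist x x'"
    if "x \<in> closure Dsq" "x' \<in> closure Dsq" for x x'
    unfolding target_sheet_def
    by (rule Gdist_lipschitz_sum[where S = "closure Dsq" and n = "count q"]) (use L that in \<open>auto simp: size_sheet\<close>)
  then show ?thesis by blast
qed

lemma target_sheet_frontier:
  assumes x: "x \<in> frontier Dsq"
  shows "target_sheet y x = replicate_mset (count target y) (fst y + snd y *v x)"
proof -
  have xc: "x \<in> closure Dsq" and m: "lam \<le> 2 * maxnorm x"
    using x lam unfolding frontier_Dsq closure_Dsq by auto
  have "target_sheet y x = (\<Sum>z\<in>{z\<in>set_mset q. \<pi> z = y}. replicate_mset (count q z) (fst y + snd y *v x))"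
    unfolding target_sheet_def using sheet_outer[OF _ xc m] interp_frontier[OF x] by (intro sum.cong) auto
  also have "\<dots> = replicate_mset (count target y) (fst y + snd y *v x)"
    unfolding count_target by (rule sum_replicate_mset) simp
  finally show ?thesis .
qed

lemma competitor_in_Tset: "competitor \<in> Tset target Dsq"
proof -
  obtain L where L: "\<forall>y. \<forall>x\<in>closure Dsq. \<forall>x'\<in>closure Dsq.
      Gdist (target_sheet y x) (target_sheet y x') \<le> L y * dist x x'"
    using target_sheet_lipschitz by metis
  have "Gdist (competitor x) (competitor x') \<le> (\<Sum>y\<in>set_mset target. L y) * dist x x'"
    if "x \<in> closure Dsq" "x' \<in> closure Dsq" for x x'
    unfolding competitor_def
    by (rule Gdist_lipschitz_sum[where S = "closure Dsq" and n = "count target"])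
      (use L that in \<open>auto simp: size_target_sheet\<close>)
  then have "qlip (size target) (closure Dsq) competitor"
    unfolding qlip_def target_def using size_competitor by auto
  moreover have "\<forall>y\<in>set_mset target. qlip (count target y) (closure Dsq) (target_sheet y)"
    unfolding qlip_def using size_target_sheet target_sheet_lipschitz by auto
  ultimately show ?thesis
    unfolding Tset_def competitor_def using target_sheet_frontier by blast
qed

lemma competitor_inner:
  assumes "2 * maxnorm x \<le> lam"
  shows "competitor x = image_mset (scaleR lam) (\<phi> (x /\<^sub>R lam))"
  using assms \<phi>_eq_sum scaled_in_closure_Dsq[OF assms]
  by (simp add: competitor_eq_sum_sheets sheet_def image_mset_sum)

lemma competitor_outer_lipschitz:
  assumes "x \<in> closure Dsq" "x' \<in> closure Dsq" "lam \<le> 2 * maxnorm x" "lam \<le> 2 * maxnorm x'"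
  shows "Gdist (competitor x) (competitor x') \<le> real (size q) * interp_lip * dist x x'"
proof -
  have "Gdist (competitor x) (competitor x') \<le> (\<Sum>z\<in>set_mset q. real (count q z) * interp_lip) * dist x x'"
    unfolding competitor_eq_sum_sheets
    by (rule Gdist_lipschitz_sum[where S = "{x. x \<in> closure Dsq \<and> lam \<le> 2 * maxnorm x}" and n = "count q"])
      (use assms in \<open>auto simp: size_sheet intro: sheet_outer_lipschitz\<close>)
  then show ?thesis
    by (simp add: sum_distrib_right[symmetric] size_multiset_overloaded_eq)
qed

lemma psibar_competitor_inner_le:
  assumes x: "maxnorm x < lam / 2"
  shows "psibar eps d (qgrad competitor x) \<le> psibar eps d (qgrad \<phi> (x /\<^sub>R lam))"
proof -
  let ?B = "box (\<chi> i. - (lam/2)) (\<chi> i. lam/2) :: pt2 set"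
  have B: "y \<in> closure Dsq \<and> 2 * maxnorm y \<le> lam" if "y \<in> ?B" for y
    using that lam unfolding mem_box_maxnorm closure_Dsq by auto
  have "x /\<^sub>R lam \<in> Dsq"
    unfolding Dsq_eq_maxnorm using x lam by (simp add: maxnorm_scaleR field_simps)
  moreover have "x \<in> ?B" unfolding mem_box_maxnorm using x .
  ultimately show ?thesis
    using B competitor_inner size_competitor size_phi closure_subset[of Dsq]
    by (intro psibar_qgrad_rescale_le[OF lam(1) open_box _ _ _ open_Dsq]) auto
qed

lemma psibar_competitor_outer_le:
  assumes x: "x \<in> Dsq" "lam / 2 < maxnorm x"
  shows "psibar eps d (qgrad competitor x) \<le> outer_cost"
proof -
  let ?U = "Dsq \<inter> - cbox (\<chi> i. - (lam/2)) (\<chi> i. lam/2)"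
  have U: "y \<in> closure Dsq \<and> lam \<le> 2 * maxnorm y" if "y \<in> ?U" for y
    using that closure_subset[of Dsq] mem_cbox_maxnorm[of y "lam/2"] by auto
  have "open ?U" using open_Dsq by (intro open_Int open_Compl) auto
  moreover have "x \<in> ?U" using x mem_cbox_maxnorm by auto
  ultimately show ?thesis
    unfolding outer_cost_def using U size_competitor competitor_outer_lipschitz interp_lip_nonneg
    by (intro psibar_qgrad_le_lipschitz) auto
qed

lemma psibar_competitor_le:
  assumes "x \<notin> cbox (\<chi> i. - (lam/2)) (\<chi> i. lam/2) - box (\<chi> i. - (lam/2)) (\<chi> i. lam/2)"
  shows "ennreal (psibar eps d (qgrad competitor x)) * indicator Dsq x
    \<le> ennreal (psibar eps d (qgrad \<phi> (x /\<^sub>R lam))) * indicator Dsq (x /\<^sub>R lam)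
      + ennreal outer_cost * indicator (Dsq - cbox (\<chi> i. - (lam/2)) (\<chi> i. lam/2)) x"
proof (cases "x \<in> Dsq")
  case x: True
  have "maxnorm x \<noteq> lam / 2"
    using assms mem_cbox_maxnorm[of x "lam/2"] mem_box_maxnorm[of x "lam/2"] by auto
  then consider "maxnorm x < lam / 2" | "lam / 2 < maxnorm x" by linarith
  then show ?thesis
  proof cases
    case 1
    then have "x /\<^sub>R lam \<in> Dsq"
      unfolding Dsq_eq_maxnorm using lam by (simp add: maxnorm_scaleR field_simps)
    then show ?thesis
      using x psibar_competitor_inner_le[OF 1] by (simp add: ennreal_leI add_increasing2)
  next
    case 2
    then have "x \<notin> cbox (\<chi> i. - (lam/2)) (\<chi> i. lam/2)" using mem_cbox_maxnorm by auto
    then show ?thesis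
      using x psibar_competitor_outer_le[OF x 2] by (simp add: ennreal_leI add_increasing)
  qed
qed simp

text \<open>The shrunk part costs \<open>\<lambda>\<^sup>2\<close> times the cost of \<open>\<phi>\<close>; the annulus has measure \<open>1 - \<lambda>\<^sup>2\<close>.\<close>

lemma nn_integral_competitor_le:
  "(\<integral>\<^sup>+x\<in>Dsq. ennreal (psibar eps d (qgrad competitor x)) \<partial>lborel) \<le>
    (\<integral>\<^sup>+x\<in>Dsq. ennreal (psibar eps d (qgrad \<phi> x)) \<partial>lborel) + ennreal (outer_cost * (1 - lam^2))"
proof -
  define G where "G y = ennreal (psibar eps d (qgrad \<phi> y)) * indicator Dsq y" for y
  define Ann where "Ann = Dsq - cbox (\<chi> i. - (lam/2)) (\<chi> i. lam/2)"
  have Ann: "Ann \<in> sets lborel" "emeasure lborel Ann = ennreal (1 - lam^2)"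
    unfolding Ann_def Dsq_def using emeasure_Dsq_Diff_cbox[of "lam/2"] lam by (auto simp: Dsq_def)
  have "0 \<le> outer_cost" unfolding outer_cost_def by simp
  have "AE x in lborel. x \<notin> cbox (\<chi> i. - (lam/2)) (\<chi> i. lam/2) - box (\<chi> i. - (lam/2)) (\<chi> i. lam/2)"
    by (rule AE_not_in[OF null_sets_cbox_Diff_box])
  then have "AE x in lborel. ennreal (psibar eps d (qgrad competitor x)) * indicator Dsq x
      \<le> G (x /\<^sub>R lam) + ennreal outer_cost * indicator Ann x"
    unfolding G_def Ann_def by eventually_elim (rule psibar_competitor_le)
  then have "(\<integral>\<^sup>+x\<in>Dsq. ennreal (psibar eps d (qgrad competitor x)) \<partial>lborel)
      \<le> (\<integral>\<^sup>+x. G (x /\<^sub>R lam) + ennreal outer_cost * indicator Ann x \<partial>lborel)"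
    by (rule nn_integral_mono_AE)
  also have "\<dots> \<le> (\<integral>\<^sup>+x. G (x /\<^sub>R lam) \<partial>lborel) + (\<integral>\<^sup>+x. ennreal outer_cost * indicator Ann x \<partial>lborel)"
    using Ann by (intro nn_integral_add_le) simp
  also have "(\<integral>\<^sup>+x. G (x /\<^sub>R lam) \<partial>lborel) \<le> ennreal (lam^2) * (\<integral>\<^sup>+y. G y \<partial>lborel)"
    by (rule nn_integral_rescale_le[OF lam(1)])
  also have "\<dots> \<le> (\<integral>\<^sup>+y. G y \<partial>lborel)"
    using lam mult_right_mono[of "ennreal (lam^2)" 1] by (simp add: power_le_one)
  also have "(\<integral>\<^sup>+x. ennreal outer_cost * indicator Ann x \<partial>lborel) = ennreal (outer_cost * (1 - lam^2))"
    using Ann \<open>0 \<le> outer_cost\<close> by (simp add: nn_integral_cmult_indicator ennreal_mult'[symmetric])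
  finally show ?thesis unfolding G_def by simp
qed

end

section \<open>The transfer estimate\<close>

lemma INF_image_add_const_ennreal: "(INF i\<in>I. f i) + (c::ennreal) = (INF i\<in>I. f i + c)"
proof (cases "I = {}")
  case False
  then show ?thesis
    using continuous_at_Inf_mono[of "\<lambda>x. x + c" "f ` I"]
      continuous_add[of "at_right (Inf (f ` I))" "\<lambda>x. x" "\<lambda>x. c"]
    by (auto simp: mono_def image_comp)
qed simp

lemma Aq_eq_INF_integral:
  "Aq eps d p = (INF \<phi>\<in>Tset p Dsq. (\<integral>\<^sup>+x\<in>Dsq. ennreal (psibar eps d (qgrad \<phi> x)) \<partial>lborel))"
  unfolding Aq_def emeasure_Dsq by (simp add: divide_ennreal_def)

lemma Aq_image_le:
  fixes q :: "qpt multiset" and \<pi> :: "qpt \<Rightarrow> qpt" and lam \<rho> R :: real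
  assumes "\<forall>z\<in>#q. norm (z - \<pi> z) \<le> \<rho>" and "\<forall>z\<in>#q. norm z \<le> R"
    and "0 < lam" "lam < 1" and "0 \<le> \<rho>" "0 \<le> R"
  shows "Aq eps d (image_mset \<pi> q) \<le> Aq eps d q +
    ennreal (real (size q) * (1 + 2 * (real (size q) * (3 * R + \<rho> + 4 * \<rho> / (1 - lam)))^2) * (1 - lam^2))"
    (is "_ \<le> _ + ?c")
proof -
  let ?F = "\<lambda>\<phi>. (\<integral>\<^sup>+x\<in>Dsq. ennreal (psibar eps d (qgrad \<phi> x)) \<partial>lborel)"
  have "Aq eps d (image_mset \<pi> q) \<le> ?F \<phi> + ?c" if \<phi>: "\<phi> \<in> Tset q Dsq" for \<phi>
  proof -
    obtain \<Phi> where "\<forall>y\<in>set_mset q. qlip (count q y) (closure Dsq) (\<Phi> y) \<and>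
              (\<forall>x\<in>frontier Dsq. \<Phi> y x = replicate_mset (count q y) (fst y + snd y *v x))"
        "\<forall>x\<in>closure Dsq. \<phi> x = (\<Sum>y\<in>set_mset q. \<Phi> y x)"
      using \<phi> unfolding Tset_def by blast
    then interpret shrink_and_interpolate q \<pi> lam \<rho> R \<phi> \<Phi>
      using assms by unfold_locales auto
    have "Aq eps d target \<le> ?F competitor"
      unfolding Aq_eq_INF_integral using competitor_in_Tset by (rule INF_lower)
    also have "\<dots> \<le> ?F \<phi> + ?c"
      using nn_integral_competitor_le unfolding outer_cost_def interp_lip_def .
    finally show ?thesis unfolding target_def .
  qed
  then have "Aq eps d (image_mset \<pi> q) \<le> (INF \<phi>\<in>Tset q Dsq. ?F \<phi> + ?c)"
    by (rule INF_greatest)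
  also have "\<dots> = Aq eps d q + ?c"
    unfolding Aq_eq_INF_integral by (rule INF_image_add_const_ennreal[symmetric])
  finally show ?thesis .
qed

text \<open>The choice \<open>lam = 1 - \<eta>\<close> keeps \<open>\<rho>/(1 - lam)\<close> bounded while \<open>1 - lam\<^sup>2 \<le> 2\<eta>\<close>.\<close>

lemma Aq_image_le_add:
  assumes "0 < e" "0 \<le> R"
  obtains \<eta> where "0 < \<eta>"
    and "\<And>(q::qpt multiset) \<pi>. size q = n \<Longrightarrow> \<forall>z\<in>#q. norm z \<le> R \<Longrightarrow> \<forall>z\<in>#q. norm (z - \<pi> z) \<le> \<eta>
          \<Longrightarrow> Aq eps d (image_mset \<pi> q) \<le> Aq eps d q + ennreal e"
proof -
  define B where "B = real n * (1 + 2 * (real n * (3 * R + 5))^2)"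
  define \<eta> where "\<eta> = min (1/2) (e / (2 * (B + 1)))"
  define c where "c = real n * (1 + 2 * (real n * (3 * R + \<eta> + 4 * \<eta> / (1 - (1 - \<eta>))))^2) * (1 - (1 - \<eta>)^2)"
  have B: "0 \<le> B" unfolding B_def by simp
  have "0 < \<eta>" unfolding \<eta>_def using assms B by simp
  moreover have "\<eta> \<le> 1/2" "\<eta> \<le> e / (2 * (B + 1))"
    unfolding \<eta>_def by (rule min.cobounded1, rule min.cobounded2)
  ultimately have \<eta>: "0 < \<eta>" "\<eta> \<le> 1/2" "\<eta> \<le> e / (2 * (B + 1))" by auto
  have "c \<le> e"
  proof -
    have "(real n * (3 * R + \<eta> + 4))^2 \<le> (real n * (3 * R + 5))^2"
      using \<eta> assms by (intro power_mono mult_left_mono) auto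
    then have "real n * (1 + 2 * (real n * (3 * R + \<eta> + 4 * \<eta> / (1 - (1 - \<eta>))))^2) \<le> B"
      unfolding B_def using \<eta> by (simp add: mult_left_mono)
    moreover have "0 \<le> 1 - (1 - \<eta>)^2" "1 - (1 - \<eta>)^2 \<le> 2 * \<eta>"
      using \<eta> by (auto simp: power2_eq_square algebra_simps)
    ultimately have "c \<le> B * (2 * \<eta>)"
      unfolding c_def using B by (intro mult_mono) auto
    also have "\<dots> \<le> 2 * \<eta> * (B + 1)"
      using \<eta>(1) by (simp add: algebra_simps)
    also have "\<dots> \<le> e"
      using \<eta>(3) B by (simp add: pos_le_divide_eq mult.commute mult.left_commute)
    finally show ?thesis .
  qed
  show ?thesis
  proof (rule that[OF \<eta>(1)])
    fix q :: "qpt multiset" and \<pi>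
    assume q: "size q = n" "\<forall>z\<in>#q. norm z \<le> R" "\<forall>z\<in>#q. norm (z - \<pi> z) \<le> \<eta>"
    have "Aq eps d (image_mset \<pi> q) \<le> Aq eps d q + ennreal c"
      using Aq_image_le[OF q(3) q(2), of "1 - \<eta>"] \<eta> assms unfolding c_def q(1) by simp
    also have "\<dots> \<le> Aq eps d q + ennreal e"
      using \<open>c \<le> e\<close> by (intro add_left_mono ennreal_leI)
    finally show "Aq eps d (image_mset \<pi> q) \<le> Aq eps d q + ennreal e" .
  qed
qed

section \<open>The growth bound\<close>

definition affine_competitor :: "qpt multiset \<Rightarrow> pt2 \<Rightarrow> pt2 multiset" where
  "affine_competitor p x = (\<Sum>y\<in>set_mset p. replicate_mset (count p y) (fst y + snd y *v x))"

lemma norm_snd_le_Xnorm: "y \<in># p \<Longrightarrow> norm (snd y) \<le> Xnorm p"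
proof -
  assume y: "y \<in># p"
  show ?thesis unfolding Xnorm_def
  proof (rule Gdist_greatest)
    show "size (image_mset snd p) = size (replicate_mset (size p) (0::mat2))" by simp
    fix xs ys assume xs: "mset xs = image_mset snd p" and ys: "mset ys = replicate_mset (size p) (0::mat2)"
    have "snd y \<in> set xs" using y xs by (metis image_eqI set_image_mset set_mset_mset)
    then obtain i where i: "i < length xs" "xs!i = snd y" by (metis in_set_conv_nth)
    have "length ys = length xs" using xs ys by (metis size_mset size_image_mset size_replicate_mset)
    then have "ys!i \<in># replicate_mset (size p) 0" using ys i by (metis nth_mem set_mset_mset)
    then have "ys!i = 0" by (simp split: if_splits)
    then show "norm (snd y) \<le> l2_list_dist xs ys" using norm_nth_diff_le_l2_list_dist[OF i(1), of ys] i by simp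
  qed
qed

lemma Xnorm_nonneg: "0 \<le> Xnorm p"
  unfolding Xnorm_def by (rule Gdist_nonneg) simp

lemma affine_sheet_lipschitz:
  assumes "y \<in># p"
  shows "Gdist (replicate_mset (count p y) (fst y + snd y *v x)) (replicate_mset (count p y) (fst y + snd y *v x'))
    \<le> real (count p y) * Xnorm p * dist x x'"
proof -
  have "norm ((fst y + snd y *v x) - (fst y + snd y *v x')) = norm (snd y *v (x - x'))"
    by (simp add: matrix_vector_mult_diff_distrib)
  also have "\<dots> \<le> Xnorm p * norm (x - x')"
    using norm_matrix_vector_mult_le[of "snd y" "x - x'"] norm_snd_le_Xnorm[OF assms]
    by (meson mult_right_mono norm_ge_zero order_trans)
  finally show ?thesis
    using Gdist_replicate_le[of "count p y" "fst y + snd y *v x" "fst y + snd y *v x'"]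
    by (simp add: dist_norm mult.assoc) (meson mult_left_mono of_nat_0_le_iff order_trans)
qed

lemma affine_competitor_lipschitz:
  "Gdist (affine_competitor p x) (affine_competitor p x') \<le> real (size p) * Xnorm p * dist x x'"
proof -
  have "Gdist (affine_competitor p x) (affine_competitor p x') \<le> (\<Sum>y\<in>set_mset p. real (count p y) * Xnorm p) * dist x x'"
    unfolding affine_competitor_def
    by (rule Gdist_lipschitz_sum[where S = UNIV and n = "count p"]) (auto intro: affine_sheet_lipschitz)
  then show ?thesis
    by (simp add: sum_distrib_right[symmetric] size_multiset_overloaded_eq)
qed

lemma size_affine_competitor: "size (affine_competitor p x) = size p"
  unfolding affine_competitor_def by (simp add: size_multiset_overloaded_eq[of p])

lemma affine_competitor_in_Tset: "affine_competitor p \<in> Tset p Dsq"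
proof -
  have "qlip (size p) (closure Dsq) (affine_competitor p)"
    unfolding qlip_def using size_affine_competitor affine_competitor_lipschitz by blast
  moreover have "qlip (count p y) (closure Dsq) (\<lambda>x. replicate_mset (count p y) (fst y + snd y *v x))"
    if "y \<in># p" for y
    unfolding qlip_def using affine_sheet_lipschitz[OF that] by auto
  ultimately show ?thesis
    unfolding Tset_def
    by (intro CollectI conjI exI[where x = "\<lambda>y x. replicate_mset (count p y) (fst y + snd y *v x)"])
      (auto simp: affine_competitor_def)
qed

lemma Aq_le_affine_cost:
  "Aq eps d p \<le> ennreal (real (size p) * (1 + 2 * (real (size p) * Xnorm p)^2))"
proof -
  let ?K = "real (size p) * Xnorm p"
  have "psibar eps d (qgrad (affine_competitor p) x) \<le> real (size p) * (1 + 2 * ?K^2)" if "x \<in> Dsq" for x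
    using affine_competitor_lipschitz size_affine_competitor Xnorm_nonneg that
    by (intro psibar_qgrad_le_lipschitz[OF open_Dsq]) auto
  then have "(\<integral>\<^sup>+x\<in>Dsq. ennreal (psibar eps d (qgrad (affine_competitor p) x)) \<partial>lborel)
      \<le> (\<integral>\<^sup>+x. ennreal (real (size p) * (1 + 2 * ?K^2)) * indicator Dsq x \<partial>lborel)"
    by (intro nn_integral_mono) (auto split: split_indicator intro: ennreal_leI)
  also have "\<dots> = ennreal (real (size p) * (1 + 2 * ?K^2))"
    using nn_integral_cmult_indicator[of Dsq lborel] emeasure_Dsq by (simp add: Dsq_def)
  finally show ?thesis
    unfolding Aq_eq_INF_integral by (rule INF_lower2[OF affine_competitor_in_Tset])
qed

lemma Aq_finite: "Aq eps d p < top"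
  using Aq_le_affine_cost[of eps d p] by (simp add: top.not_eq_extremum le_less_trans)

lemma Aq_le_growth:
  assumes "1 \<le> size p"
  shows "Aq eps d p \<le> ennreal (2 * real (size p) ^ 3 * (1 + (Xnorm p)^2))"
proof -
  have "real (size p) ^ 1 \<le> real (size p) ^ 3"
    using assms by (intro power_increasing) auto
  then have "real (size p) * (1 + 2 * (real (size p) * Xnorm p)^2) \<le> 2 * real (size p) ^ 3 * (1 + (Xnorm p)^2)"
    by (simp add: power2_eq_square power3_eq_cube algebra_simps)
  then show ?thesis
    using Aq_le_affine_cost order_trans ennreal_leI by blast
qed

section \<open>Semicontinuity\<close>

lemma le_Liminf_of_eventually_le_add:
  fixes f :: "'a \<Rightarrow> ennreal"
  assumes "F \<noteq> bot" and "\<And>e. 0 < e \<Longrightarrow> eventually (\<lambda>k. a \<le> f k + ennreal e) F"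
  shows "a \<le> Liminf F f"
proof (rule ennreal_le_epsilon)
  fix e :: real assume "0 < e"
  then have "a \<le> Liminf F (\<lambda>k. f k + ennreal e)"
    by (intro Liminf_bounded assms(2))
  then show "a \<le> Liminf F f + ennreal e"
    by (simp add: Liminf_add_const[OF assms(1)])
qed

lemma tendsto_of_eventually_close_ennreal:
  fixes f :: "nat \<Rightarrow> ennreal"
  assumes "a < top" and "\<And>e. 0 < e \<Longrightarrow> eventually (\<lambda>k. a \<le> f k + ennreal e \<and> f k \<le> a + ennreal e) sequentially"
  shows "f \<longlonglongrightarrow> a"
proof (rule Liminf_eq_Limsup)
  have "a \<le> liminf f"
  proof (rule le_Liminf_of_eventually_le_add)
    fix e :: real assume "0 < e"
    from assms(2)[OF this] show "\<forall>\<^sub>F k in sequentially. a \<le> f k + ennreal e"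
      by eventually_elim blast
  qed simp
  moreover have "limsup f \<le> a"
  proof (rule ennreal_le_epsilon)
    fix e :: real assume "0 < e"
    from assms(2)[OF this] have "\<forall>\<^sub>F k in sequentially. f k \<le> a + ennreal e"
      by eventually_elim blast
    then show "limsup f \<le> a + ennreal e" by (rule Limsup_bounded)
  qed
  ultimately show "liminf f = a" "limsup f = a"
    using Liminf_le_Limsup[of sequentially f] by auto
qed simp

lemma Aq_close_le:
  fixes p :: "qpt multiset"
  assumes "0 < e"
  obtains \<eta> where "0 < \<eta>"
    and "\<And>q. size q = size p \<Longrightarrow> Gdist q p < \<eta> \<Longrightarrow>
          Aq eps d p \<le> Aq eps d q + ennreal e \<and> (same_max_mult q p \<longrightarrow> Aq eps d q \<le> Aq eps d p + ennreal e)"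
proof -
  define R where "R = 1 + (\<Sum>y\<in>set_mset p. norm y)"
  have norm_p: "norm y + 1 \<le> R" if "y \<in># p" for y
    unfolding R_def using member_le_sum[of y "set_mset p" norm] that by simp
  have "0 \<le> R" unfolding R_def by (simp add: sum_nonneg add_nonneg_nonneg)
  obtain \<eta> where \<eta>: "0 < \<eta>"
    "\<And>(q::qpt multiset) \<pi>. size q = size p \<Longrightarrow> \<forall>z\<in>#q. norm z \<le> R \<Longrightarrow> \<forall>z\<in>#q. norm (z - \<pi> z) \<le> \<eta>
       \<Longrightarrow> Aq eps d (image_mset \<pi> q) \<le> Aq eps d q + ennreal e"
    using Aq_image_le_add[OF assms \<open>0 \<le> R\<close>] by blast
  obtain s where s: "0 < s" "\<forall>y\<in>set_mset p. \<forall>y'\<in>set_mset p. y \<noteq> y' \<longrightarrow> s \<le> dist y y'"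
    using finite_separated[of "set_mset p"] by auto
  show ?thesis
  proof (rule that[of "min \<eta> (min 1 (s / 2))"])
    show "0 < min \<eta> (min 1 (s / 2))" using \<eta>(1) s(1) by simp
    fix q :: "qpt multiset" assume q: "size q = size p" "Gdist q p < min \<eta> (min 1 (s / 2))"
    obtain \<pi> where \<pi>: "p = image_mset \<pi> q" "\<forall>z\<in>#q. norm (z - \<pi> z) \<le> Gdist q p"
      using image_mset_of_Gdist_small[OF q(1) s] q(2) by auto
    have close: "norm (z - \<pi> z) \<le> \<eta>" "norm (z - \<pi> z) \<le> 1" if "z \<in># q" for z
      using \<pi>(2) that q(2) by force+
    have "norm z \<le> R" if "z \<in># q" for z
    proof -
      have "norm z \<le> norm (\<pi> z) + norm (z - \<pi> z)"
        using norm_triangle_ineq[of "\<pi> z" "z - \<pi> z"] by simp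
      then show ?thesis using norm_p[of "\<pi> z"] close(2)[OF that] \<pi>(1) that by simp
    qed
    then have "Aq eps d p \<le> Aq eps d q + ennreal e"
      using \<eta>(2)[OF q(1)] close(1) \<pi>(1) by simp
    moreover have "Aq eps d q \<le> Aq eps d p + ennreal e" if same: "same_max_mult q p"
    proof -
      obtain \<sigma> where \<sigma>: "q = image_mset \<sigma> p" "\<And>y. y \<in># p \<Longrightarrow> \<sigma> y \<in># q \<and> \<pi> (\<sigma> y) = y"
        using same_max_mult_image_mset_inverse[OF \<pi>(1) same] by blast
      have "norm (y - \<sigma> y) \<le> \<eta>" if "y \<in># p" for y
        using close(1)[of "\<sigma> y"] \<sigma>(2)[OF that] by (simp add: norm_minus_commute)
      moreover have "norm y \<le> R" if "y \<in># p" for y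
        using norm_p[OF that] by simp
      ultimately show ?thesis
        using \<eta>(2)[of p \<sigma>] \<sigma>(1) by simp
    qed
    ultimately show "Aq eps d p \<le> Aq eps d q + ennreal e \<and> (same_max_mult q p \<longrightarrow> Aq eps d q \<le> Aq eps d p + ennreal e)"
      by blast
  qed
qed

lemma Aq_eventually_close:
  fixes p :: "qpt multiset" and pk :: "nat \<Rightarrow> qpt multiset"
  assumes "\<forall>k. size (pk k) = size p" and "(\<lambda>k. Gdist (pk k) p) \<longlonglongrightarrow> 0" and "0 < e"
  shows "eventually (\<lambda>k. Aq eps d p \<le> Aq eps d (pk k) + ennreal e \<and>
    (same_max_mult (pk k) p \<longrightarrow> Aq eps d (pk k) \<le> Aq eps d p + ennreal e)) sequentially"
proof -
  obtain \<eta> where "0 < \<eta>" and \<eta>: "\<And>q. size q = size p \<Longrightarrow> Gdist q p < \<eta> \<Longrightarrow>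
      Aq eps d p \<le> Aq eps d q + ennreal e \<and> (same_max_mult q p \<longrightarrow> Aq eps d q \<le> Aq eps d p + ennreal e)"
    using Aq_close_le[OF assms(3)] by blast
  show ?thesis
    using order_tendstoD(2)[OF assms(2) \<open>0 < \<eta>\<close>] by eventually_elim (use \<eta> assms(1) in auto)
qed

lemma Aq_lower_semicontinuous:
  fixes p :: "qpt multiset" and pk :: "nat \<Rightarrow> qpt multiset"
  assumes "\<forall>k. size (pk k) = size p" and "(\<lambda>k. Gdist (pk k) p) \<longlonglongrightarrow> 0"
  shows "Aq eps d p \<le> liminf (\<lambda>k. Aq eps d (pk k))"
proof (rule le_Liminf_of_eventually_le_add)
  fix e :: real assume "0 < e"
  from Aq_eventually_close[OF assms this]
  show "\<forall>\<^sub>F k in sequentially. Aq eps d p \<le> Aq eps d (pk k) + ennreal e"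
    by eventually_elim blast
qed simp

lemma Aq_tendsto_same_max_mult:
  fixes p :: "qpt multiset" and pk :: "nat \<Rightarrow> qpt multiset"
  assumes "\<forall>k. size (pk k) = size p" and "(\<lambda>k. Gdist (pk k) p) \<longlonglongrightarrow> 0"
    and "\<forall>k. same_max_mult (pk k) p"
  shows "(\<lambda>k. Aq eps d (pk k)) \<longlonglongrightarrow> Aq eps d p"
proof (rule tendsto_of_eventually_close_ennreal[OF Aq_finite])
  fix e :: real assume "0 < e"
  from Aq_eventually_close[OF assms(1,2) this]
  show "\<forall>\<^sub>F k in sequentially. Aq eps d p \<le> Aq eps d (pk k) + ennreal e \<and> Aq eps d (pk k) \<le> Aq eps d p + ennreal e"
    by eventually_elim (use assms(3) in blast)
qed

theorem mainTheorem8: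
  fixes eps d :: real and Q :: nat
  assumes "0 < eps" and "eps < root 4 (4/3)"
    and "0 < d" and "wnorm (v1 eps d) = wnorm (v2 eps d)" and "wnorm (v2 eps d) = wnorm (v3 eps d)"
    and "1 \<le> Q"
  shows "(\<forall>(p::qpt multiset) (pk::nat \<Rightarrow> qpt multiset).
            size p = Q \<and> (\<forall>k. size (pk k) = Q) \<and> (\<lambda>k. Gdist (pk k) p) \<longlonglongrightarrow> 0
            \<longrightarrow> Aq eps d p \<le> liminf (\<lambda>k. Aq eps d (pk k)))
       \<and> (\<forall>(p::qpt multiset) (pk::nat \<Rightarrow> qpt multiset).
            size p = Q \<and> (\<forall>k. size (pk k) = Q) \<and> (\<forall>k. same_max_mult (pk k) p)
            \<and> (\<lambda>k. Gdist (pk k) p) \<longlonglongrightarrow> 0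
            \<longrightarrow> (\<lambda>k. Aq eps d (pk k)) \<longlonglongrightarrow> Aq eps d p)
       \<and> (\<exists>C>0. \<forall>p::qpt multiset. size p = Q \<longrightarrow> Aq eps d p \<le> ennreal (C * (1 + (Xnorm p)^2)))"
proof (intro conjI allI impI)
  fix p :: "qpt multiset" and pk :: "nat \<Rightarrow> qpt multiset"
  assume "size p = Q \<and> (\<forall>k. size (pk k) = Q) \<and> (\<lambda>k. Gdist (pk k) p) \<longlonglongrightarrow> 0"
  then show "Aq eps d p \<le> liminf (\<lambda>k. Aq eps d (pk k))"
    by (intro Aq_lower_semicontinuous) auto
next
  fix p :: "qpt multiset" and pk :: "nat \<Rightarrow> qpt multiset"
  assume "size p = Q \<and> (\<forall>k. size (pk k) = Q) \<and> (\<forall>k. same_max_mult (pk k) p) \<and> (\<lambda>k. Gdist (pk k) p) \<longlonglongrightarrow> 0"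
  then show "(\<lambda>k. Aq eps d (pk k)) \<longlonglongrightarrow> Aq eps d p"
    by (intro Aq_tendsto_same_max_mult) auto
next
  show "\<exists>C>0. \<forall>p::qpt multiset. size p = Q \<longrightarrow> Aq eps d p \<le> ennreal (C * (1 + (Xnorm p)^2))"
    using Aq_le_growth \<open>1 \<le> Q\<close> by (intro exI[of _ "2 * real Q ^ 3"]) auto
qed

end
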